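(* Assume (A), (R), (S), let $c$ be a global solution of (E) with initial condition in $\ell^1_1$, and let $\mu>\max\{2-\alpha-\beta,1\}$. Set $\rho_\mu=\gamma/(\mu-1)$, $p=(\mu+\gamma-1)/(1+\gamma-\alpha-\beta)$, $q=p/(p-1)$. Then there exists $T>0$ such that for all $t\ge T$ $$\mathfrak m_\mu(t)\le 2\Bigl(\frac{2^{2+\rho_\mu}(2^\mu\mu)^pq^{1-p}}{p}\widehat A_*^{\,p}\widehat{\mathfrak s}_1^{\,1+p+\rho_\mu}+2^{2+\rho_\mu}\widehat{\mathfrak s}_\mu\widehat{\mathfrak s}_1^{\,\rho_\mu}\Bigr)^{\frac1{1+\rho_\mu}}$$ and $$\mathfrak m_\mu(t)\le 4\Bigl(\frac{(2^\mu\mu)^pq^{1-p}}{p}\widehat A_*^{\,p}\widehat{\mathfrak s}_1^{\,1+p}+\widehat{\mathfrak s}_\mu\Bigr).$$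
   Context: Throughout, $\mathbb N=\{1,2,\dots\}$. We consider the forced discrete coagulation equation $$\frac{d}{dt}c_k=\frac12\sum_{\ell=1}^{k-1}a_{k-\ell,\ell}c_{k-\ell}c_\ell-c_k\sum_{\ell=1}^{\infty}a_{k,\ell}c_\ell+s_k-r_kc_k,\qquad k\in\mathbb N,\tag{E}$$ with real coefficients satisfying the standing assumptions: (A) $a_{k,\ell}=a_{\ell,k}$ and $0\le a_{k,\ell}\le A_*(k^\alpha\ell^\beta+k^\beta\ell^\alpha)$ for all $k,\ell\in\mathbb N$, with constants $A_*>0$, $\alpha,\beta\in[0,1]$, $\alpha\le\beta$; (R) $r_k\ge R_*k^\gamma$ for all $k\in\mathbb N$, with $R_*>0$ and $\gamma>\max\{0,\alpha+\beta-1\}$; (S) $s_k\ge 0$ for all $k$, and for every $\mu\ge0$ there is $\mathfrak s_\mu>0$ with $\sum_{k\ge1}k^\mu s_k\le\mathfrak s_\mu$. Write $\widehat A_*=A_*/R_*$ and $\widehat{\mathfrak s}_\mu=\mathfrak s_\mu/R_*$. For $\mu\ge0$, $\ell^1_\mu$ is the set of sequences $(c_k)_{k\in\mathbb N}$ with $c_k\in[0,\infty)$ and $\sum_k k^\mu c_k<\infty$. Solution: a sequence $c=(c_k)_{k\in\mathbb N}$ of continuous functions $c_k:[0,T)\to[0,\infty)$ is a solution of (E) on $[0,T)$ with initial condition $c^{\mathrm{in}}\in\ell^1_1$ if (i) for each $k$, (E) holds for all $t\in(0,T)$; (ii) for each $\mu\ge1$, $c\in L^\infty([0,T),\ell^1_1)\cap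 C^1((0,T),\ell^1_\mu)$; (iii) $c_k(0)=c_k^{\mathrm{in}}$ for all $k$. It is a global solution if $T=\infty$. Moments: $\mathfrak m_\mu(t)=\sum_k k^\mu c_k(t)$. *)

theory Defs
  imports "HOL-Analysis.Analysis"
begin

text \<open>Sequences are indexed by nat; only indices k >= 1 are relevant (the index set is
  the positive integers). Values at index 0 are ignored.\<close>

definition wl1 :: "real \<Rightarrow> (nat \<Rightarrow> real) \<Rightarrow> bool" where
  "wl1 \<mu> x \<longleftrightarrow> (\<lambda>k. real k powr \<mu> * \<bar>x k\<bar>) summable_on {1..}"

definition wnorm :: "real \<Rightarrow> (nat \<Rightarrow> real) \<Rightarrow> real" where
  "wnorm \<mu> x = (\<Sum>\<^sub>\<infinity>k\<in>{1..}. real k powr \<mu> * \<bar>x k\<bar>)"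

definition ell1 :: "real \<Rightarrow> (nat \<Rightarrow> real) \<Rightarrow> bool" where
  "ell1 \<mu> x \<longleftrightarrow> (\<forall>k\<ge>1. 0 \<le> x k) \<and> wl1 \<mu> x"

definition moment :: "real \<Rightarrow> (nat \<Rightarrow> real) \<Rightarrow> real" where
  "moment \<mu> x = (\<Sum>\<^sub>\<infinity>k\<in>{1..}. real k powr \<mu> * x k)"

definition coag_rhs ::
  "(nat \<Rightarrow> nat \<Rightarrow> real) \<Rightarrow> (nat \<Rightarrow> real) \<Rightarrow> (nat \<Rightarrow> real) \<Rightarrow> (nat \<Rightarrow> real) \<Rightarrow> nat \<Rightarrow> real" where
  "coag_rhs a s r x k =
     (1/2) * (\<Sum>l\<in>{1..<k}. a (k - l) l * x (k - l) * x l)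
     - x k * (\<Sum>\<^sub>\<infinity>l\<in>{1..}. a k l * x l) + s k - r k * x k"

definition C1_wl1 :: "real \<Rightarrow> (real \<Rightarrow> nat \<Rightarrow> real) \<Rightarrow> bool" where
  "C1_wl1 \<mu> c \<longleftrightarrow> (\<exists>c'.
     (\<forall>t>0. wl1 \<mu> (c t) \<and> wl1 \<mu> (c' t)) \<and>
     (\<forall>t>0. ((\<lambda>h. wnorm \<mu> (\<lambda>k. c h k - c t k - (h - t) * c' t k) / \<bar>h - t\<bar>) \<longlongrightarrow> 0) (at t)) \<and>
     (\<forall>t>0. ((\<lambda>h. wnorm \<mu> (\<lambda>k. c' h k - c' t k)) \<longlongrightarrow> 0) (at t)))"

definition global_solution ::
  "(nat \<Rightarrow> nat \<Rightarrow> real) \<Rightarrow> (nat \<Rightarrow> real) \<Rightarrow> (nat \<Rightarrow> real) \<Rightarrow> (nat \<Rightarrow> real)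
     \<Rightarrow> (real \<Rightarrow> nat \<Rightarrow> real) \<Rightarrow> bool" where
  "global_solution a s r cin c \<longleftrightarrow>
     (\<forall>k\<ge>1. continuous_on {0..} (\<lambda>t. c t k) \<and> (\<forall>t\<ge>0. 0 \<le> c t k)) \<and>
     (\<forall>k\<ge>1. \<forall>t>0. ((\<lambda>\<tau>. c \<tau> k) has_real_derivative coag_rhs a s r (c t) k) (at t)) \<and>
     (\<exists>M. AE t in lborel. 0 \<le> t \<longrightarrow> ell1 1 (c t) \<and> wnorm 1 (c t) \<le> M) \<and>
     (\<forall>\<mu>\<ge>1. C1_wl1 \<mu> c) \<and>
     (\<forall>k\<ge>1. c 0 k = cin k)"

end

theory Submission
  imports Defs
begin

text \<open>
  The \<open>\<mu>\<close>-moment evolves by gain minus removal plus source. Pointwise, the gain of the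
  kernel is at most a constant below \<open>3/4 * 2 powr \<mu> * \<mu>\<close> times
  \<open>u powr (\<mu> + \<alpha> + \<beta> - 1) * v + u * v powr (\<mu> + \<alpha> + \<beta> - 1)\<close>, so the gain term is bounded
  by the product of the first moment and the \<open>(\<mu> + \<alpha> + \<beta> - 1)\<close>-moment. Interpolating the
  latter between the first and the \<open>(\<mu> + \<gamma>)\<close>-moment and applying Young's inequality, a fraction
  \<open>\<eta> < 3/4\<close> of the removal term \<open>R * m\<^sub>\<mu>\<^sub>+\<^sub>\<gamma>\<close> absorbs the gain up to a power of the first
  moment. The first moment is only driven by source and removal and therefore eventually stays
  below a level slightly above \<open>\<ss> 1 / R\<close>. After that, \<open>m\<^sub>\<mu>\<^sub>+\<^sub>\<gamma> \<ge> m\<^sub>\<mu>\<close> and the interpolation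
  \<open>m\<^sub>\<mu> powr (1 + \<rho>) \<le> m\<^sub>1 powr \<rho> * m\<^sub>\<mu>\<^sub>+\<^sub>\<gamma>\<close> give two differential inequalities, each of
  which drives \<open>m\<^sub>\<mu>\<close> below the corresponding level in finite time and keeps it there.
\<close>

section \<open>Elementary inequalities for real powers\<close>

lemma one_plus_mult_le_powr:
  fixes x \<mu> :: real
  assumes "\<mu> \<ge> 1" "x \<ge> 0"
  shows "1 + \<mu> * x \<le> (1 + x) powr \<mu>"
proof -
  have "((1 + x) powr \<mu>) powr (1/\<mu>) * 1 powr (1 - 1/\<mu>) \<le> (1/\<mu>) * (1 + x) powr \<mu> + (1 - 1/\<mu>) * 1"
    by (rule Youngs_inequality_0) (use assms in auto)
  moreover have "((1 + x) powr \<mu>) powr (1/\<mu>) = 1 + x"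
    using assms by (simp add: powr_powr)
  ultimately have "\<mu> * (1 + x) \<le> \<mu> * ((1/\<mu>) * (1 + x) powr \<mu> + (1 - 1/\<mu>))"
    using assms by (intro mult_left_mono) auto
  then show ?thesis
    using assms by (simp add: algebra_simps)
qed

lemma one_plus_powr_le_one_plus_mult:
  fixes y t :: real
  assumes "0 \<le> t" "t \<le> 1" "y \<ge> 0"
  shows "(1 + y) powr t \<le> 1 + t * y"
proof -
  have "(1 + y) powr t * 1 powr (1 - t) \<le> t * (1 + y) + (1 - t) * 1"
    by (rule Youngs_inequality_0) (use assms in auto)
  then show ?thesis
    by (simp add: algebra_simps)
qed

lemma one_plus_powr_le_quadratic:
  fixes x \<mu> :: real
  assumes "1 \<le> \<mu>" "\<mu> \<le> 2" "x \<ge> 0"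
  shows "(1 + x) powr \<mu> \<le> 1 + \<mu> * x + \<mu> * (\<mu> - 1) / 2 * x\<^sup>2"
proof -
  define f where "f y = 1 + \<mu> * y + \<mu> * (\<mu> - 1) / 2 * y\<^sup>2 - (1 + y) powr \<mu>" for y
  have "f 0 \<le> f x"
  proof (rule DERIV_nonneg_imp_increasing_open[OF assms(3)])
    fix y assume y: "0 < y" "y < x"
    have "(f has_real_derivative \<mu> + \<mu> * (\<mu> - 1) * y - \<mu> * (1 + y) powr (\<mu> - 1)) (at y)"
      unfolding f_def using y
      by (auto intro!: derivative_eq_intros simp: field_simps power2_eq_square)
    moreover have "\<mu> * (1 + y) powr (\<mu> - 1) \<le> \<mu> * (1 + (\<mu> - 1) * y)"
      using one_plus_powr_le_one_plus_mult[of "\<mu> - 1" y] assms y by (intro mult_left_mono) auto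
    ultimately show "\<exists>d. (f has_real_derivative d) (at y) \<and> d \<ge> 0"
      by (auto simp: algebra_simps)
  next
    show "continuous_on {0..x} f"
      unfolding f_def by (intro continuous_intros) auto
  qed
  then show ?thesis
    by (simp add: f_def)
qed

lemma one_plus_powr_le_powr_one_plus:
  fixes x \<mu> :: real
  assumes "\<mu> \<ge> 1" "0 \<le> x" "x \<le> 1"
  shows "1 + x powr \<mu> \<le> (1 + x) powr \<mu>"
proof -
  have "x powr \<mu> \<le> x"
    using powr_le_one_le[of x \<mu>] assms by (cases "x = 0") auto
  moreover have "x \<le> \<mu> * x"
    using assms by (simp add: mult_le_cancel_right1)
  ultimately show ?thesis
    using one_plus_mult_le_powr[OF assms(1,2)] by linarith
qed

lemma powr_add_le_powr_sum:
  fixes u v \<mu> :: real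
  assumes "\<mu> \<ge> 1" "0 \<le> u" "0 \<le> v"
  shows "u powr \<mu> + v powr \<mu> \<le> (u + v) powr \<mu>"
proof -
  have ordered: "u powr \<mu> + v powr \<mu> \<le> (u + v) powr \<mu>" if "0 \<le> v" "v \<le> u" for u v
  proof (cases "u = 0")
    case False
    define x where "x = v / u"
    have u: "u > 0" "v = u * x" "0 \<le> x" "x \<le> 1"
      using that False by (auto simp: x_def)
    have "u powr \<mu> * (1 + x powr \<mu>) \<le> u powr \<mu> * (1 + x) powr \<mu>"
      using one_plus_powr_le_powr_one_plus[of \<mu> x] assms u by (intro mult_left_mono) auto
    moreover have "(u + v) powr \<mu> = u powr \<mu> * (1 + x) powr \<mu>"
      using u powr_mult[of u "1 + x" \<mu>] by (simp add: distrib_left)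
    ultimately show ?thesis
      using u by (simp add: powr_mult algebra_simps)
  qed (use that in simp)
  show ?thesis
    using ordered[of v u] ordered[of u v] assms by (cases "v \<le> u") (auto simp: add.commute)
qed

text \<open>The constant comes from the second-order Taylor bound on \<open>(1 + x) powr \<mu>\<close> when
  \<open>\<mu> \<le> 2\<close> and from convexity of \<open>x powr \<mu>\<close> on \<open>[1, 2]\<close> when \<open>\<mu> > 2\<close>.\<close>
definition gain_const :: "real \<Rightarrow> real" where
  "gain_const \<mu> = (if \<mu> \<le> 2 then \<mu>\<^sup>2 else 2 * (2 powr \<mu> - 1))"

lemma gain_const_nonneg: "\<mu> > 1 \<Longrightarrow> 0 \<le> gain_const \<mu>"
  using powr_mono[of 0 \<mu> 2] by (auto simp: gain_const_def)

lemma gain_const_less: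
  fixes \<mu> :: real
  assumes "\<mu> > 1"
  shows "gain_const \<mu> < 3/4 * (2 powr \<mu> * \<mu>)"
proof (cases "\<mu> \<le> 2")
  case True
  have "1 + \<mu> \<le> 2 powr \<mu>"
    using one_plus_mult_le_powr[of \<mu> 1] assms by simp
  then have "\<mu> < 3/4 * 2 powr \<mu>"
    using True by simp
  then have "\<mu> * \<mu> < \<mu> * (3/4 * 2 powr \<mu>)"
    using assms by simp
  then show ?thesis
    using True by (simp add: gain_const_def power2_eq_square algebra_simps)
next
  case False
  have "2 powr \<mu> * (2 - 3/4 * \<mu>) < 2"
  proof (cases "\<mu> \<ge> 8/3")
    case True
    then have "2 powr \<mu> * (2 - 3/4 * \<mu>) \<le> 0"
      by (simp add: mult_nonneg_nonpos)
    then show ?thesis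
      by simp
  next
    case small: False
    have "1 + (2 - \<mu>) * ln 2 \<le> exp ((2 - \<mu>) * ln 2)"
      by (rule exp_ge_add_one_self)
    moreover have "(\<mu> - 2) * ln 2 < (\<mu> - 2) * (3/2)"
      using False ln_2_less_1 by (intro mult_strict_left_mono) auto
    ultimately have "2 - 3/4 * \<mu> < 1/2 * 2 powr (2 - \<mu>)"
      by (simp add: powr_def algebra_simps)
    moreover have four: "2 powr \<mu> * 2 powr (2 - \<mu>) = 4"
      by (simp add: powr_add[symmetric])
    ultimately have "2 powr \<mu> * (2 - 3/4 * \<mu>) < 2 powr \<mu> * (1/2 * 2 powr (2 - \<mu>))"
      by (intro mult_strict_left_mono) auto
    then show ?thesis
      using four by simp
  qed
  then show ?thesis
    using False by (simp add: gain_const_def algebra_simps)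
qed

text \<open>This is where \<open>\<alpha> + \<beta> > 2 - \<mu>\<close> enters.\<close>
lemma powr_add_powr_le_affine:
  fixes x \<mu> \<alpha> \<beta> :: real
  assumes x: "0 < x" "x \<le> 1" and ab: "0 \<le> \<alpha>" "0 \<le> \<beta>"
    and \<mu>: "1 < \<mu>" "\<mu> \<le> 2" "\<alpha> + \<beta> > 2 - \<mu>"
  shows "x powr \<alpha> + x powr \<beta> \<le> \<mu> + (2 - \<mu>) * x"
proof -
  have "(1 - x powr \<alpha>) * (1 - x powr \<beta>) \<ge> 0"
    using x ab by (auto intro!: mult_nonneg_nonneg powr_le1)
  then have "x powr \<alpha> + x powr \<beta> \<le> 1 + x powr (\<alpha> + \<beta>)"
    by (simp add: powr_add algebra_simps)
  moreover have "x powr (\<alpha> + \<beta>) \<le> x powr (2 - \<mu>)"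
    using powr_mono'[of "2 - \<mu>" "\<alpha> + \<beta>" x] \<mu> x by auto
  moreover have "x powr (2 - \<mu>) * 1 powr (\<mu> - 1) \<le> (2 - \<mu>) * x + (\<mu> - 1) * 1"
    by (rule Youngs_inequality_0) (use x \<mu> in auto)
  ultimately show ?thesis
    by simp
qed

lemma gain_bound_unit:
  fixes x \<mu> \<alpha> \<beta> :: real
  assumes x: "0 < x" "x \<le> 1" and ab: "0 \<le> \<alpha>" "\<alpha> \<le> \<beta>" "\<beta> \<le> 1"
    and \<mu>: "\<mu> > 1" "\<alpha> + \<beta> > 2 - \<mu>"
  shows "(x powr \<alpha> + x powr \<beta>) * ((1 + x) powr \<mu> - 1 - x powr \<mu>) \<le> gain_const \<mu> * x"
proof -
  have h0: "0 \<le> (1 + x) powr \<mu> - 1 - x powr \<mu>"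
    using one_plus_powr_le_powr_one_plus[of \<mu> x] \<mu> x by auto
  have xa: "x powr \<alpha> \<le> 1" "x powr \<beta> \<le> 1"
    using x ab by (auto intro!: powr_le1)
  show ?thesis
  proof (cases "\<mu> \<le> 2")
    case True
    define k where "k = \<mu> * (\<mu> - 1) / 2 - 1"
    have "x\<^sup>2 \<le> x powr \<mu>"
      using powr_mono'[of \<mu> 2 x] True x by (simp add: powr_realpow)
    then have hb: "(1 + x) powr \<mu> - 1 - x powr \<mu> \<le> x * (\<mu> + k * x)"
      using one_plus_powr_le_quadratic[of \<mu> x] True \<mu> x
      unfolding k_def by (simp add: algebra_simps power2_eq_square)
    have F: "x powr \<alpha> + x powr \<beta> \<le> \<mu> + (2 - \<mu>) * x"
      using powr_add_powr_le_affine[of x \<alpha> \<beta> \<mu>] x ab \<mu> True by simp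
    have "(x powr \<alpha> + x powr \<beta>) * ((1 + x) powr \<mu> - 1 - x powr \<mu>)
        \<le> (\<mu> + (2 - \<mu>) * x) * (x * (\<mu> + k * x))"
      by (rule mult_mono[OF F hb]) (use x \<mu> True h0 in auto)
    also have "\<dots> = x * (\<mu>\<^sup>2 + \<mu> * x * ((\<mu> - 1) * (\<mu> - 2) / 2) + (2 - \<mu>) * k * x\<^sup>2)"
      unfolding k_def by (simp add: field_simps power2_eq_square)
    also have "\<dots> \<le> x * \<mu>\<^sup>2"
    proof -
      have "\<mu> * (\<mu> - 1) \<le> 2 * 1"
        using True \<mu> by (intro mult_mono) auto
      then have "(2 - \<mu>) * k * x\<^sup>2 \<le> 0"
        using True unfolding k_def by (simp add: mult_nonneg_nonpos mult_nonpos_nonneg)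
      moreover have "\<mu> * x * ((\<mu> - 1) * (\<mu> - 2) / 2) \<le> 0"
        using \<mu> True x by (intro mult_nonneg_nonpos) (auto intro: mult_nonneg_nonpos)
      ultimately show ?thesis
        using x by (intro mult_left_mono) auto
    qed
    finally show ?thesis
      using True by (simp add: gain_const_def mult.commute)
  next
    case False
    have "(1 + x) powr \<mu> \<le> (1 - x) * 1 powr \<mu> + x * 2 powr \<mu>"
      using convex_onD[OF powr_convex, of \<mu> x 1 2] x \<mu> by (simp add: algebra_simps)
    then have "(1 + x) powr \<mu> \<le> 1 + x * (2 powr \<mu> - 1)"
      by (simp add: algebra_simps)
    then have hb: "(1 + x) powr \<mu> - 1 - x powr \<mu> \<le> x * (2 powr \<mu> - 1)"
      using powr_ge_zero[of x \<mu>] by linarith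
    have "(x powr \<alpha> + x powr \<beta>) * ((1 + x) powr \<mu> - 1 - x powr \<mu>) \<le> 2 * (x * (2 powr \<mu> - 1))"
      by (rule mult_mono) (use xa hb h0 x in auto)
    then show ?thesis
      using False by (simp add: gain_const_def algebra_simps)
  qed
qed

lemma gain_bound:
  fixes u v \<mu> \<alpha> \<beta> :: real
  assumes uv: "0 < u" "0 < v" and ab: "0 \<le> \<alpha>" "\<alpha> \<le> \<beta>" "\<beta> \<le> 1"
    and \<mu>: "\<mu> > 1" "\<alpha> + \<beta> > 2 - \<mu>"
  shows "(u powr \<alpha> * v powr \<beta> + u powr \<beta> * v powr \<alpha>) * ((u + v) powr \<mu> - u powr \<mu> - v powr \<mu>)
          \<le> gain_const \<mu> * (u powr (\<mu> + \<alpha> + \<beta> - 1) * v + u * v powr (\<mu> + \<alpha> + \<beta> - 1))"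
proof -
  have ordered: "(u powr \<alpha> * v powr \<beta> + u powr \<beta> * v powr \<alpha>) * ((u + v) powr \<mu> - u powr \<mu> - v powr \<mu>)
      \<le> gain_const \<mu> * (u powr (\<mu> + \<alpha> + \<beta> - 1) * v)" if "0 < v" "v \<le> u" for u v
  proof -
    define x where "x = v / u"
    have u: "u > 0" "v = u * x" "0 < x" "x \<le> 1"
      using that by (auto simp: x_def)
    have "(u powr \<alpha> * v powr \<beta> + u powr \<beta> * v powr \<alpha>) * ((u + v) powr \<mu> - u powr \<mu> - v powr \<mu>)
        = (u powr (\<alpha> + \<beta>) * u powr \<mu>) * ((x powr \<alpha> + x powr \<beta>) * ((1 + x) powr \<mu> - 1 - x powr \<mu>))"
    proof -
      have "(u + v) powr \<mu> = u powr \<mu> * (1 + x) powr \<mu>"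
        using u powr_mult[of u "1 + x" \<mu>] by (simp add: distrib_left)
      then show ?thesis
        using u by (simp add: powr_mult powr_add algebra_simps)
    qed
    also have "\<dots> \<le> (u powr (\<alpha> + \<beta>) * u powr \<mu>) * (gain_const \<mu> * x)"
      by (rule mult_left_mono[OF gain_bound_unit]) (use u ab \<mu> in auto)
    also have "\<dots> = gain_const \<mu> * (u powr (\<mu> + \<alpha> + \<beta> - 1) * v)"
    proof -
      have "u powr (\<mu> + \<alpha> + \<beta> - 1) * u = u powr (\<alpha> + \<beta>) * u powr \<mu>"
        using u by (simp add: powr_diff powr_add)
      then show ?thesis
        using u by (simp add: algebra_simps)
    qed
    finally show ?thesis .
  qed
  have G: "0 \<le> gain_const \<mu>"
    using gain_const_nonneg \<mu> by simp
  show ?thesis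
  proof (cases "v \<le> u")
    case True
    have "0 \<le> gain_const \<mu> * (u * v powr (\<mu> + \<alpha> + \<beta> - 1))"
      using G uv by simp
    then show ?thesis
      using ordered[of v u] ordered[of u v] uv True by (simp add: algebra_simps)
  next
    case False
    have "0 \<le> gain_const \<mu> * (u powr (\<mu> + \<alpha> + \<beta> - 1) * v)"
      using G uv by simp
    moreover have "(v powr \<alpha> * u powr \<beta> + v powr \<beta> * u powr \<alpha>) * ((v + u) powr \<mu> - v powr \<mu> - u powr \<mu>)
        \<le> gain_const \<mu> * (v powr (\<mu> + \<alpha> + \<beta> - 1) * u)"
      by (intro ordered) (use uv False in auto)
    ultimately show ?thesis
      by (simp add: algebra_simps)
  qed
qed

section \<open>Finite Hoelder inequality and interpolation of moments\<close>

lemma sum_powr_Hoelder: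
  fixes f g :: "'a \<Rightarrow> real"
  assumes I: "finite I" and fg: "\<And>k. k \<in> I \<Longrightarrow> 0 \<le> f k" "\<And>k. k \<in> I \<Longrightarrow> 0 \<le> g k"
    and \<theta>: "0 < \<theta>" "\<theta> < 1"
  shows "(\<Sum>k\<in>I. f k powr (1 - \<theta>) * g k powr \<theta>) \<le> (\<Sum>k\<in>I. f k) powr (1 - \<theta>) * (\<Sum>k\<in>I. g k) powr \<theta>"
proof -
  define F where "F = (\<Sum>k\<in>I. f k)"
  define G where "G = (\<Sum>k\<in>I. g k)"
  have F0: "F \<ge> 0" "G \<ge> 0"
    unfolding F_def G_def using fg by (auto intro: sum_nonneg)
  show ?thesis
  proof (cases "F = 0 \<or> G = 0")
    case True
    then have "\<forall>k\<in>I. f k = 0 \<or> g k = 0"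
      using sum_nonneg_eq_0_iff[OF I] fg unfolding F_def G_def by blast
    then have "(\<Sum>k\<in>I. f k powr (1 - \<theta>) * g k powr \<theta>) = 0"
      by (intro sum.neutral) auto
    then show ?thesis
      by simp
  next
    case False
    then have Fp: "F > 0" "G > 0"
      using F0 by auto
    text \<open>Young's inequality applied to the normalised terms \<open>f k / F\<close> and \<open>g k / G\<close>.\<close>
    have young_term: "f k powr (1 - \<theta>) * g k powr \<theta>
        \<le> F powr (1 - \<theta>) * G powr \<theta> * ((1 - \<theta>) * (f k / F) + \<theta> * (g k / G))"
      if k: "k \<in> I" for k
    proof (cases "f k = 0 \<or> g k = 0")
      case True
      have "0 \<le> F powr (1 - \<theta>) * G powr \<theta> * ((1 - \<theta>) * (f k / F) + \<theta> * (g k / G))"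
        using fg[OF k] Fp \<theta> by (intro mult_nonneg_nonneg add_nonneg_nonneg) auto
      then show ?thesis
        using True by auto
    next
      case False
      then have p: "f k > 0" "g k > 0"
        using fg[OF k] by auto
      have "(f k / F) powr (1 - \<theta>) * (g k / G) powr \<theta> \<le> (1 - \<theta>) * (f k / F) + \<theta> * (g k / G)"
        by (rule Youngs_inequality_0) (use p Fp \<theta> in auto)
      then have "F powr (1 - \<theta>) * G powr \<theta> * ((f k / F) powr (1 - \<theta>) * (g k / G) powr \<theta>)
          \<le> F powr (1 - \<theta>) * G powr \<theta> * ((1 - \<theta>) * (f k / F) + \<theta> * (g k / G))"
        by (intro mult_left_mono) auto
      moreover have "F powr (1 - \<theta>) * G powr \<theta> * ((f k / F) powr (1 - \<theta>) * (g k / G) powr \<theta>)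
          = f k powr (1 - \<theta>) * g k powr \<theta>"
        using p Fp by (simp add: powr_divide)
      ultimately show ?thesis
        by simp
    qed
    have "(\<Sum>k\<in>I. f k powr (1 - \<theta>) * g k powr \<theta>)
        \<le> (\<Sum>k\<in>I. F powr (1 - \<theta>) * G powr \<theta> * ((1 - \<theta>) * (f k / F) + \<theta> * (g k / G)))"
      using young_term by (rule sum_mono)
    also have "\<dots> = F powr (1 - \<theta>) * G powr \<theta> * ((1 - \<theta>) * (F / F) + \<theta> * (G / G))"
      unfolding sum_distrib_left[symmetric] sum.distrib sum_divide_distrib[symmetric]
        F_def[symmetric] G_def[symmetric] by simp
    also have "\<dots> = F powr (1 - \<theta>) * G powr \<theta>"
      using Fp by simp
    finally show ?thesis
      unfolding F_def G_def .
  qed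
qed

lemma sum_moment_interpolation:
  fixes c :: "nat \<Rightarrow> real"
  assumes I: "finite I" "\<And>k. k \<in> I \<Longrightarrow> k \<ge> 1" and c: "\<And>k. k \<in> I \<Longrightarrow> 0 \<le> c k"
    and \<theta>: "0 < \<theta>" "\<theta> < 1"
  shows "(\<Sum>k\<in>I. real k powr ((1 - \<theta>) + \<theta> * w) * c k)
    \<le> (\<Sum>k\<in>I. real k * c k) powr (1 - \<theta>) * (\<Sum>k\<in>I. real k powr w * c k) powr \<theta>"
proof -
  have split: "real k powr ((1 - \<theta>) + \<theta> * w) * c k
      = (real k * c k) powr (1 - \<theta>) * (real k powr w * c k) powr \<theta>" if k: "k \<in> I" for k
  proof (cases "c k = 0")
    case True
    then show ?thesis
      using \<theta> by simp
  next
    case False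
    then have ck: "c k > 0"
      using c[OF k] by simp
    have "(real k * c k) powr (1 - \<theta>) * (real k powr w * c k) powr \<theta>
        = real k powr (1 - \<theta>) * real k powr (w * \<theta>) * (c k powr (1 - \<theta>) * c k powr \<theta>)"
      by (simp add: powr_mult powr_powr algebra_simps)
    also have "\<dots> = real k powr ((1 - \<theta>) + \<theta> * w) * c k"
      using ck I(2)[OF k] by (simp add: powr_add[symmetric] algebra_simps)
    finally show ?thesis
      by simp
  qed
  have "(\<Sum>k\<in>I. real k powr ((1 - \<theta>) + \<theta> * w) * c k)
      = (\<Sum>k\<in>I. (real k * c k) powr (1 - \<theta>) * (real k powr w * c k) powr \<theta>)"
    using split by (rule sum.cong[OF refl])
  also have "\<dots> \<le> (\<Sum>k\<in>I. real k * c k) powr (1 - \<theta>) * (\<Sum>k\<in>I. real k powr w * c k) powr \<theta>"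
    by (rule sum_powr_Hoelder) (use I c \<theta> in auto)
  finally show ?thesis .
qed

lemma sum_moment_interpolation_powr:
  fixes c :: "nat \<Rightarrow> real"
  assumes c: "\<And>k. k \<ge> 1 \<Longrightarrow> 0 \<le> c k" and \<mu>: "\<mu> > 1" and \<gamma>: "\<gamma> > 0"
  defines "\<rho> \<equiv> \<gamma> / (\<mu> - 1)"
  shows "(\<Sum>k\<in>{1..N}. real k powr \<mu> * c k) powr (1 + \<rho>)
    \<le> (\<Sum>k\<in>{1..N}. real k * c k) powr \<rho> * (\<Sum>k\<in>{1..N}. real k powr (\<mu> + \<gamma>) * c k)"
proof -
  define X Y Z where "X = (\<Sum>k\<in>{1..N}. real k * c k)"
    and "Y = (\<Sum>k\<in>{1..N}. real k powr (\<mu> + \<gamma>) * c k)" and "Z = (\<Sum>k\<in>{1..N}. real k powr \<mu> * c k)"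
  define \<theta> where "\<theta> = (\<mu> - 1) / (\<mu> + \<gamma> - 1)"
  have d: "\<mu> - 1 > 0" "\<mu> + \<gamma> - 1 > 0"
    using \<mu> \<gamma> by auto
  have \<theta>01: "0 < \<theta>" "\<theta> < 1"
    unfolding \<theta>_def using d \<gamma> by (auto simp: field_simps)
  have "\<theta> * (\<mu> + \<gamma> - 1) = \<mu> - 1"
    unfolding \<theta>_def using d by simp
  then have "(1 - \<theta>) + \<theta> * (\<mu> + \<gamma>) = \<mu>"
    by (simp add: algebra_simps)
  then have ip: "Z \<le> X powr (1 - \<theta>) * Y powr \<theta>"
    using sum_moment_interpolation[of "{1..N}" c \<theta> "\<mu> + \<gamma>"] \<theta>01 c
    unfolding X_def Y_def Z_def by simp
  have X0: "X \<ge> 0" "Y \<ge> 0" "Z \<ge> 0"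
    unfolding X_def Y_def Z_def using c by (auto intro!: sum_nonneg)
  have \<rho>0: "1 + \<rho> > 0"
    unfolding \<rho>_def using d \<gamma> by (simp add: add_pos_nonneg)
  have "1 - \<theta> = \<gamma> / (\<mu> + \<gamma> - 1)" "1 + \<rho> = (\<mu> + \<gamma> - 1) / (\<mu> - 1)"
    unfolding \<theta>_def \<rho>_def using d by (simp_all add: field_simps)
  then have exps: "(1 - \<theta>) * (1 + \<rho>) = \<rho>" "\<theta> * (1 + \<rho>) = 1"
    unfolding \<theta>_def \<rho>_def using d by simp_all
  have "Z powr (1 + \<rho>) \<le> (X powr (1 - \<theta>) * Y powr \<theta>) powr (1 + \<rho>)"
    by (rule powr_mono2) (use \<rho>0 X0 ip in auto)
  also have "\<dots> = X powr ((1 - \<theta>) * (1 + \<rho>)) * Y powr (\<theta> * (1 + \<rho>))"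
    by (simp add: powr_mult powr_powr)
  also have "\<dots> = X powr \<rho> * Y"
    unfolding exps using X0 by simp
  finally show ?thesis
    unfolding X_def Y_def Z_def .
qed

section \<open>A comparison principle for differential inequalities\<close>

lemma DERIV_le_neg_imp_le_linear:
  fixes f f' :: "real \<Rightarrow> real"
  assumes "a \<le> b" and f': "\<And>t. a \<le> t \<Longrightarrow> t \<le> b \<Longrightarrow> (f has_real_derivative f' t) (at t)"
    and neg: "\<And>t. a < t \<Longrightarrow> t < b \<Longrightarrow> f' t \<le> -\<delta>"
  shows "f b \<le> f a - \<delta> * (b - a)"
proof -
  define g where "g t = f t + \<delta> * t" for t
  have "g b \<le> g a"
  proof (rule DERIV_nonpos_imp_decreasing_open[OF assms(1)])
    fix t assume t: "a < t" "t < b"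
    have "(g has_real_derivative f' t + \<delta>) (at t)"
      unfolding g_def using f'[of t] t by (auto intro!: derivative_eq_intros)
    then show "\<exists>y. (g has_real_derivative y) (at t) \<and> y \<le> 0"
      using neg[OF t] by auto
  next
    have "continuous_on {a..b} f"
      by (rule DERIV_continuous_on[where D = f']) (use f' in \<open>auto intro: has_field_derivative_at_within\<close>)
    then show "continuous_on {a..b} g"
      unfolding g_def by (intro continuous_intros)
  qed
  then show ?thesis
    by (simp add: g_def algebra_simps)
qed

text \<open>A function whose derivative is at most \<open>-\<delta> < 0\<close> whenever it lies above \<open>K\<close> eventually
  stays below \<open>K\<close>: it reaches the level in finite time, and the last time before a later
  excursion above \<open>K\<close> at which it sat at or below \<open>K\<close> yields a contradiction.\<close>
lemma eventually_le_if_DERIV_le_neg_above: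
  fixes f f' :: "real \<Rightarrow> real"
  assumes f': "\<And>t. t \<ge> t0 \<Longrightarrow> (f has_real_derivative f' t) (at t)"
    and neg: "\<And>t. t \<ge> t0 \<Longrightarrow> f t \<ge> K \<Longrightarrow> f' t \<le> -\<delta>" and \<delta>: "\<delta> > 0"
  shows "\<exists>T\<ge>t0. \<forall>t\<ge>T. f t \<le> K"
proof -
  have cont: "continuous_on {a..b} f" if "t0 \<le> a" for a b
    by (rule DERIV_continuous_on[where D = f']) (use f' that in \<open>auto intro: has_field_derivative_at_within\<close>)
  obtain s where s: "s \<ge> t0" "f s \<le> K"
  proof (rule ccontr)
    assume "\<not> thesis"
    with that have above: "\<And>s. s \<ge> t0 \<Longrightarrow> f s > K"
      by force
    define L where "L = (f t0 - K) / \<delta> + 1"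
    have L0: "L \<ge> 0"
      using above[of t0] \<delta> by (simp add: L_def)
    have "f (t0 + L) \<le> f t0 - \<delta> * ((t0 + L) - t0)"
      by (rule DERIV_le_neg_imp_le_linear[where f' = f']) (use L0 f' neg above in \<open>auto simp: less_imp_le\<close>)
    also have "\<dots> = K - \<delta>"
      using \<delta> by (simp add: L_def field_simps)
    finally show False
      using above[of "t0 + L"] L0 \<delta> by simp
  qed
  have "f t \<le> K" if t: "t \<ge> s" for t
  proof (rule ccontr)
    assume ft: "\<not> f t \<le> K"
    define S where "S = {s..t} \<inter> f -` {..K}"
    have "closed S"
      unfolding S_def by (rule continuous_closed_preimage) (use cont s in auto)
    moreover have sS: "s \<in> S"
      using s t by (auto simp: S_def)
    moreover have bS: "bdd_above S"
      unfolding S_def by (auto intro: bdd_aboveI[of _ t])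
    ultimately have "Sup S \<in> S"
      using closed_contains_Sup by blast
    then have \<tau>: "s \<le> Sup S" "Sup S \<le> t" "f (Sup S) \<le> K"
      by (auto simp: S_def)
    have after: "f x > K" if "Sup S < x" "x \<le> t" for x
    proof (rule ccontr)
      assume "\<not> f x > K"
      then have "x \<in> S"
        using that \<tau> by (auto simp: S_def)
      then show False
        using cSup_upper[OF _ bS] that by fastforce
    qed
    have "Sup S < t"
      using \<tau> ft by (cases "Sup S = t") auto
    have "f t \<le> f (Sup S) - \<delta> * (t - Sup S)"
      by (rule DERIV_le_neg_imp_le_linear[where f' = f']) (use \<tau> s f' neg after in \<open>auto simp: less_imp_le\<close>)
    then show False
      using \<tau> \<delta> \<open>Sup S < t\<close> ft by (smt (verit) mult_pos_pos)
  qed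
  then show ?thesis
    using s by blast
qed

section \<open>Weighted sequence spaces\<close>

lemma partial_sums_tendsto_infsum:
  fixes f :: "nat \<Rightarrow> real"
  assumes "f summable_on {1..}"
  shows "(\<lambda>N. \<Sum>k\<in>{1..N}. f k) \<longlonglongrightarrow> infsum f {1..}"
proof -
  define g where "g k = (if k \<ge> 1 then f k else 0)" for k
  have "(g has_sum infsum f {1..}) UNIV"
    using has_sum_cong_neutral[of UNIV "{1..}" g f] has_sum_infsum[OF assms] by (auto simp: g_def)
  then have "g sums infsum f {1..}"
    by (rule has_sum_imp_sums)
  then have "(\<lambda>n. sum g {..<Suc n}) \<longlonglongrightarrow> infsum f {1..}"
    unfolding sums_def by (rule LIMSEQ_Suc)
  moreover have "sum g {..<Suc n} = (\<Sum>k\<in>{1..n}. f k)" for n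
  proof -
    have "{..<Suc n} = insert 0 {1..n}"
      by auto
    then show ?thesis
      by (simp add: g_def)
  qed
  ultimately show ?thesis
    by simp
qed

lemma wl1_imp_summable_on:
  "wl1 \<nu> x \<Longrightarrow> (\<lambda>k. real k powr \<nu> * x k) summable_on {1..}"
proof -
  assume "wl1 \<nu> x"
  then have "(\<lambda>k. norm (real k powr \<nu> * x k)) summable_on {1..}"
    unfolding wl1_def by (simp add: abs_mult)
  then show ?thesis
    using summable_on_iff_abs_summable_on_real by blast
qed

lemma wl1_term_le_wnorm:
  assumes "wl1 \<nu> x" "k \<ge> 1"
  shows "real k powr \<nu> * \<bar>x k\<bar> \<le> wnorm \<nu> x"
  using finite_sum_le_infsum[of "\<lambda>k. real k powr \<nu> * \<bar>x k\<bar>" "{1..}" "{k}"] assms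
  by (auto simp: wl1_def wnorm_def)

lemma abs_infsum_le_wnorm:
  assumes "wl1 \<nu> x"
  shows "\<bar>infsum (\<lambda>k. real k powr \<nu> * x k) {1..}\<bar> \<le> wnorm \<nu> x"
  using norm_infsum_bound[of "\<lambda>k. real k powr \<nu> * x k" "{1..}"] assms
  by (simp add: wl1_def wnorm_def abs_mult)

lemma wl1_diff_diff_cmult:
  assumes "wl1 \<nu> x" "wl1 \<nu> y" "wl1 \<nu> z"
  shows "wl1 \<nu> (\<lambda>k. x k - y k - b * z k)"
proof -
  have sum: "(\<lambda>k. real k powr \<nu> * \<bar>x k\<bar> + real k powr \<nu> * \<bar>y k\<bar> + \<bar>b\<bar> * (real k powr \<nu> * \<bar>z k\<bar>))
      summable_on {1..}"
    using assms unfolding wl1_def by (intro summable_on_add summable_on_cmult_right) auto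
  have "(\<lambda>k. real k powr \<nu> * \<bar>x k - y k - b * z k\<bar>) summable_on {1..}"
  proof (rule summable_on_comparison_test[OF sum])
    fix k :: nat
    have "\<bar>x k - y k - b * z k\<bar> \<le> \<bar>x k\<bar> + \<bar>y k\<bar> + \<bar>b\<bar> * \<bar>z k\<bar>"
      by (simp add: abs_mult[symmetric]; linarith)
    then have "real k powr \<nu> * \<bar>x k - y k - b * z k\<bar> \<le> real k powr \<nu> * (\<bar>x k\<bar> + \<bar>y k\<bar> + \<bar>b\<bar> * \<bar>z k\<bar>)"
      by (rule mult_left_mono) simp
    then show "real k powr \<nu> * \<bar>x k - y k - b * z k\<bar>
        \<le> real k powr \<nu> * \<bar>x k\<bar> + real k powr \<nu> * \<bar>y k\<bar> + \<bar>b\<bar> * (real k powr \<nu> * \<bar>z k\<bar>)"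
      by (simp add: algebra_simps)
  qed simp
  then show ?thesis
    by (simp add: wl1_def)
qed

lemma infsum_diff_diff_cmult:
  fixes f g h :: "nat \<Rightarrow> real"
  assumes "f summable_on A" "g summable_on A" "h summable_on A"
  shows "infsum (\<lambda>k. f k - g k - b * h k) A = infsum f A - infsum g A - b * infsum h A"
proof -
  have "((\<lambda>k. f k + (- g k) + (- (b * h k))) has_sum (infsum f A + (- infsum g A) + (- (b * infsum h A)))) A"
    using assms by (intro has_sum_add has_sum_uminus[THEN iffD2])
      (auto intro: has_sum_cmult_right has_sum_infsum)
  then show ?thesis
    by (simp add: infsumI)
qed

lemma wl1_derivative_imp_coordinate_derivative:
  fixes c :: "real \<Rightarrow> nat \<Rightarrow> real"
  assumes wl: "\<forall>\<^sub>F h in at t. wl1 \<nu> (\<lambda>k. c h k - c t k - (h - t) * d k)"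
    and lim: "((\<lambda>h. wnorm \<nu> (\<lambda>k. c h k - c t k - (h - t) * d k) / \<bar>h - t\<bar>) \<longlongrightarrow> 0) (at t)"
    and k: "k \<ge> 1"
  shows "((\<lambda>\<tau>. c \<tau> k) has_real_derivative d k) (at t)"
proof -
  define D where "D h = (\<lambda>k. c h k - c t k - (h - t) * d k)" for h
  have "((\<lambda>h. (c h k - c t k) / (h - t) - d k) \<longlongrightarrow> 0) (at t)"
  proof (rule Lim_null_comparison)
    show "((\<lambda>h. wnorm \<nu> (D h) / \<bar>h - t\<bar> / real k powr \<nu>) \<longlongrightarrow> 0) (at t)"
      using tendsto_divide_zero[OF lim[folded D_def]] by simp
    have "\<forall>\<^sub>F h in at t. h \<noteq> t"
      by (simp add: eventually_at_filter)
    with wl show "\<forall>\<^sub>F h in at t. norm ((c h k - c t k) / (h - t) - d k) \<le> wnorm \<nu> (D h) / \<bar>h - t\<bar> / real k powr \<nu>"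
    proof eventually_elim
      case (elim h)
      have "real k powr \<nu> * \<bar>D h k\<bar> \<le> wnorm \<nu> (D h)"
        using wl1_term_le_wnorm[OF _ k] elim by (simp add: D_def)
      then have "\<bar>D h k\<bar> / \<bar>h - t\<bar> \<le> wnorm \<nu> (D h) / real k powr \<nu> / \<bar>h - t\<bar>"
        using k by (intro divide_right_mono) (simp_all add: field_simps)
      moreover have "(c h k - c t k) / (h - t) - d k = D h k / (h - t)"
        using elim by (simp add: D_def field_simps)
      ultimately show ?case
        by (simp add: abs_divide field_simps)
    qed
  qed
  then show ?thesis
    by (simp add: has_field_derivative_iff LIM_zero_iff)
qed

lemma wl1_derivative_imp_moment_derivative:
  fixes c :: "real \<Rightarrow> nat \<Rightarrow> real"
  assumes wl: "\<forall>\<^sub>F h in at t. wl1 \<nu> (c h)" "wl1 \<nu> (c t)" "wl1 \<nu> d"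
    and lim: "((\<lambda>h. wnorm \<nu> (\<lambda>k. c h k - c t k - (h - t) * d k) / \<bar>h - t\<bar>) \<longlongrightarrow> 0) (at t)"
  shows "((\<lambda>\<tau>. moment \<nu> (c \<tau>)) has_real_derivative infsum (\<lambda>k. real k powr \<nu> * d k) {1..}) (at t)"
proof -
  define D where "D h = (\<lambda>k. c h k - c t k - (h - t) * d k)" for h
  define M' where "M' = infsum (\<lambda>k. real k powr \<nu> * d k) {1..}"
  have "((\<lambda>h. (moment \<nu> (c h) - moment \<nu> (c t)) / (h - t) - M') \<longlongrightarrow> 0) (at t)"
  proof (rule Lim_null_comparison)
    show "((\<lambda>h. wnorm \<nu> (D h) / \<bar>h - t\<bar>) \<longlongrightarrow> 0) (at t)"
      using lim by (simp add: D_def)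
    have "\<forall>\<^sub>F h in at t. h \<noteq> t"
      by (simp add: eventually_at_filter)
    with wl(1) show "\<forall>\<^sub>F h in at t.
        norm ((moment \<nu> (c h) - moment \<nu> (c t)) / (h - t) - M') \<le> wnorm \<nu> (D h) / \<bar>h - t\<bar>"
    proof eventually_elim
      case (elim h)
      have "infsum (\<lambda>k. real k powr \<nu> * D h k) {1..}
          = infsum (\<lambda>k. real k powr \<nu> * c h k - real k powr \<nu> * c t k - (h - t) * (real k powr \<nu> * d k)) {1..}"
        by (rule infsum_cong) (simp add: D_def algebra_simps)
      also have "\<dots> = moment \<nu> (c h) - moment \<nu> (c t) - (h - t) * M'"
        unfolding moment_def M'_def
        by (rule infsum_diff_diff_cmult) (use wl elim wl1_imp_summable_on in auto)
      finally have "\<bar>moment \<nu> (c h) - moment \<nu> (c t) - (h - t) * M'\<bar> \<le> wnorm \<nu> (D h)"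
        using abs_infsum_le_wnorm[OF wl1_diff_diff_cmult[OF elim(1) wl(2,3), where b = "h - t"]] by (simp add: D_def)
      then have "\<bar>moment \<nu> (c h) - moment \<nu> (c t) - (h - t) * M'\<bar> / \<bar>h - t\<bar> \<le> wnorm \<nu> (D h) / \<bar>h - t\<bar>"
        by (simp add: divide_right_mono)
      moreover have "(moment \<nu> (c h) - moment \<nu> (c t)) / (h - t) - M'
          = (moment \<nu> (c h) - moment \<nu> (c t) - (h - t) * M') / (h - t)"
        using elim by (simp add: field_simps)
      ultimately show ?case
        by (simp add: abs_divide)
    qed
  qed
  then show ?thesis
    unfolding has_field_derivative_iff M'_def by (simp add: LIM_zero_iff)
qed

text \<open>\<open>C1_wl1\<close> only asserts the existence of some derivative \<open>c'\<close> in the weighted norm; its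
  coordinates must be the pointwise derivatives.\<close>
lemma C1_wl1_moment_has_derivative:
  fixes c :: "real \<Rightarrow> nat \<Rightarrow> real" and F :: "nat \<Rightarrow> real"
  assumes C1: "C1_wl1 \<nu> c"
    and F: "\<And>k. k \<ge> 1 \<Longrightarrow> ((\<lambda>\<tau>. c \<tau> k) has_real_derivative F k) (at t)"
    and t: "t > 0"
  shows "((\<lambda>\<tau>. moment \<nu> (c \<tau>)) has_real_derivative infsum (\<lambda>k. real k powr \<nu> * F k) {1..}) (at t)"
    and "(\<lambda>k. real k powr \<nu> * F k) summable_on {1..}"
    and "wl1 \<nu> (c t)"
proof -
  obtain c' where W: "\<And>t. t > 0 \<Longrightarrow> wl1 \<nu> (c t) \<and> wl1 \<nu> (c' t)"
    and lim: "((\<lambda>h. wnorm \<nu> (\<lambda>k. c h k - c t k - (h - t) * c' t k) / \<bar>h - t\<bar>) \<longlongrightarrow> 0) (at t)"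
    using C1 t unfolding C1_wl1_def by blast
  have "\<forall>\<^sub>F h in at t. h > 0"
    using order_tendstoD(1)[OF tendsto_ident_at t] .
  then have near: "\<forall>\<^sub>F h in at t. wl1 \<nu> (c h)"
    by eventually_elim (use W in blast)
  have coord: "c' t k = F k" if "k \<ge> 1" for k
  proof (rule DERIV_unique[OF wl1_derivative_imp_coordinate_derivative F])
    show "\<forall>\<^sub>F h in at t. wl1 \<nu> (\<lambda>k. c h k - c t k - (h - t) * c' t k)"
      using near by eventually_elim (use W t wl1_diff_diff_cmult in blast)
  qed (use lim that in auto)
  show "wl1 \<nu> (c t)"
    using W[OF t] by simp
  have "(\<lambda>k. real k powr \<nu> * c' t k) summable_on {1..}"
    using W[OF t] wl1_imp_summable_on by blast
  then show "(\<lambda>k. real k powr \<nu> * F k) summable_on {1..}"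
    by (rule summable_on_cong[THEN iffD1, rotated]) (simp add: coord)
  have "infsum (\<lambda>k. real k powr \<nu> * F k) {1..} = infsum (\<lambda>k. real k powr \<nu> * c' t k) {1..}"
    by (rule infsum_cong) (simp add: coord)
  then show "((\<lambda>\<tau>. moment \<nu> (c \<tau>)) has_real_derivative infsum (\<lambda>k. real k powr \<nu> * F k) {1..}) (at t)"
    using wl1_derivative_imp_moment_derivative[OF near _ _ lim] W[OF t] by simp
qed

section \<open>The truncated weak formulation\<close>

definition index_triangle :: "nat \<Rightarrow> (nat \<times> nat) set" where
  "index_triangle N = {(i,j). 1 \<le> i \<and> 1 \<le> j \<and> i + j \<le> N}"

lemma sum_index_triangle_gain:
  fixes F :: "nat \<Rightarrow> nat \<Rightarrow> 'a::comm_monoid_add"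
  shows "(\<Sum>k\<in>{1..N}. \<Sum>l\<in>{1..<k}. F (k - l) l) = (\<Sum>(i,j)\<in>index_triangle N. F i j)"
proof -
  have "(\<Sum>k\<in>{1..N}. \<Sum>l\<in>{1..<k}. F (k - l) l) = (\<Sum>(k,l)\<in>Sigma {1..N} (\<lambda>k. {1..<k}). F (k - l) l)"
    by (rule sum.Sigma) auto
  also have "\<dots> = (\<Sum>(i,j)\<in>index_triangle N. F i j)"
    by (rule sum.reindex_bij_witness[where i="\<lambda>(i,j). (i+j, j)" and j="\<lambda>(k,l). (k-l, l)"])
       (auto simp: index_triangle_def)
  finally show ?thesis .
qed

lemma sum_index_triangle_loss:
  fixes F :: "nat \<Rightarrow> nat \<Rightarrow> 'a::comm_monoid_add"
  shows "(\<Sum>k\<in>{1..N}. \<Sum>l\<in>{1..N-k}. F k l) = (\<Sum>(i,j)\<in>index_triangle N. F i j)"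
proof -
  have "(\<Sum>k\<in>{1..N}. \<Sum>l\<in>{1..N-k}. F k l) = (\<Sum>(k,l)\<in>Sigma {1..N} (\<lambda>k. {1..N-k}). F k l)"
    by (rule sum.Sigma) auto
  also have "Sigma {1..N} (\<lambda>k. {1..N-k}) = index_triangle N"
    by (auto simp: index_triangle_def)
  finally show ?thesis
    by simp
qed

lemma sum_index_triangle_swap:
  fixes F :: "nat \<Rightarrow> nat \<Rightarrow> 'a::comm_monoid_add"
  shows "(\<Sum>(i,j)\<in>index_triangle N. F i j) = (\<Sum>(i,j)\<in>index_triangle N. F j i)"
  by (rule sum.reindex_bij_witness[where i="\<lambda>(i,j). (j,i)" and j="\<lambda>(i,j). (j,i)"])
    (auto simp: index_triangle_def)

text \<open>Truncation drops only loss terms, which have the right sign.\<close>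
lemma sum_index_triangle_loss_le:
  fixes x :: "nat \<Rightarrow> real" and a :: "nat \<Rightarrow> nat \<Rightarrow> real"
  assumes xnn: "\<And>k. k \<ge> 1 \<Longrightarrow> x k \<ge> 0"
    and anon: "\<And>k l. k \<ge> 1 \<Longrightarrow> l \<ge> 1 \<Longrightarrow> 0 \<le> a k l"
    and summ: "\<And>k. k \<ge> 1 \<Longrightarrow> (\<lambda>l. a k l * x l) summable_on {1..}"
  shows "(\<Sum>(i,j)\<in>index_triangle N. real i powr \<nu> * a i j * x i * x j)
    \<le> (\<Sum>k\<in>{1..N}. real k powr \<nu> * x k * (\<Sum>\<^sub>\<infinity>l\<in>{1..}. a k l * x l))"
proof -
  have "(\<Sum>(i,j)\<in>index_triangle N. real i powr \<nu> * a i j * x i * x j)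
      = (\<Sum>k\<in>{1..N}. real k powr \<nu> * x k * (\<Sum>l\<in>{1..N-k}. a k l * x l))"
    unfolding sum_index_triangle_loss[symmetric] by (simp add: sum_distrib_left algebra_simps)
  also have "\<dots> \<le> (\<Sum>k\<in>{1..N}. real k powr \<nu> * x k * (\<Sum>\<^sub>\<infinity>l\<in>{1..}. a k l * x l))"
  proof (rule sum_mono)
    fix k assume k: "k \<in> {1..N}"
    have "(\<Sum>l\<in>{1..N-k}. a k l * x l) \<le> (\<Sum>\<^sub>\<infinity>l\<in>{1..}. a k l * x l)"
      by (rule finite_sum_le_infsum) (use summ k anon xnn in auto)
    then show "real k powr \<nu> * x k * (\<Sum>l\<in>{1..N-k}. a k l * x l)
        \<le> real k powr \<nu> * x k * (\<Sum>\<^sub>\<infinity>l\<in>{1..}. a k l * x l)"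
      using xnn k by (intro mult_left_mono) auto
  qed
  finally show ?thesis .
qed

lemma moment_sum_coag_rhs_le:
  fixes x :: "nat \<Rightarrow> real" and a :: "nat \<Rightarrow> nat \<Rightarrow> real"
  assumes xnn: "\<And>k. k \<ge> 1 \<Longrightarrow> x k \<ge> 0"
    and anon: "\<And>k l. k \<ge> 1 \<Longrightarrow> l \<ge> 1 \<Longrightarrow> 0 \<le> a k l"
    and asym: "\<And>k l. k \<ge> 1 \<Longrightarrow> l \<ge> 1 \<Longrightarrow> a k l = a l k"
    and summ: "\<And>k. k \<ge> 1 \<Longrightarrow> (\<lambda>l. a k l * x l) summable_on {1..}"
  shows "(\<Sum>k\<in>{1..N}. real k powr \<nu> * coag_rhs a s r x k) \<le>
     (1/2) * (\<Sum>(i,j)\<in>index_triangle N. a i j * (real (i+j) powr \<nu> - real i powr \<nu> - real j powr \<nu>) * x i * x j)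
     + (\<Sum>k\<in>{1..N}. real k powr \<nu> * s k) - (\<Sum>k\<in>{1..N}. real k powr \<nu> * r k * x k)"
proof -
  define L where "L k = (\<Sum>\<^sub>\<infinity>l\<in>{1..}. a k l * x l)" for k
  have g: "(\<Sum>k\<in>{1..N}. real k powr \<nu> * (\<Sum>l\<in>{1..<k}. a (k - l) l * x (k - l) * x l))
      = (\<Sum>(i,j)\<in>index_triangle N. real (i+j) powr \<nu> * a i j * x i * x j)"
  proof -
    have "(\<Sum>k\<in>{1..N}. real k powr \<nu> * (\<Sum>l\<in>{1..<k}. a (k - l) l * x (k - l) * x l))
      = (\<Sum>k\<in>{1..N}. \<Sum>l\<in>{1..<k}. real ((k-l) + l) powr \<nu> * a (k - l) l * x (k - l) * x l)"
      by (intro sum.cong refl) (auto simp: sum_distrib_left algebra_simps intro!: sum.cong)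
    also have "\<dots> = (\<Sum>(i,j)\<in>index_triangle N. real (i+j) powr \<nu> * a i j * x i * x j)"
      by (rule sum_index_triangle_gain[where F="\<lambda>i j. real (i+j) powr \<nu> * a i j * x i * x j"])
    finally show ?thesis .
  qed
  have l1: "(\<Sum>(i,j)\<in>index_triangle N. real i powr \<nu> * a i j * x i * x j) \<le> (\<Sum>k\<in>{1..N}. real k powr \<nu> * x k * L k)"
    unfolding L_def by (rule sum_index_triangle_loss_le) (use xnn anon summ in auto)
  have l2: "(\<Sum>(i,j)\<in>index_triangle N. real j powr \<nu> * a i j * x i * x j) = (\<Sum>(i,j)\<in>index_triangle N. real i powr \<nu> * a i j * x i * x j)"
  proof -
    have "(\<Sum>(i,j)\<in>index_triangle N. real j powr \<nu> * a i j * x i * x j) = (\<Sum>(i,j)\<in>index_triangle N. real i powr \<nu> * a j i * x j * x i)"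
      by (rule sum_index_triangle_swap[where F="\<lambda>i j. real j powr \<nu> * a i j * x i * x j"])
    also have "\<dots> = (\<Sum>(i,j)\<in>index_triangle N. real i powr \<nu> * a i j * x i * x j)"
      by (intro sum.cong refl) (auto simp: index_triangle_def asym)
    finally show ?thesis .
  qed
  have expand: "(\<Sum>k\<in>{1..N}. real k powr \<nu> * coag_rhs a s r x k) =
      (1/2) * (\<Sum>k\<in>{1..N}. real k powr \<nu> * (\<Sum>l\<in>{1..<k}. a (k - l) l * x (k - l) * x l))
      - (\<Sum>k\<in>{1..N}. real k powr \<nu> * x k * L k)
      + (\<Sum>k\<in>{1..N}. real k powr \<nu> * s k) - (\<Sum>k\<in>{1..N}. real k powr \<nu> * r k * x k)"
    unfolding coag_rhs_def L_def
    by (simp add: sum_distrib_left sum_subtractf sum.distrib algebra_simps)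
  have split: "(\<Sum>(i,j)\<in>index_triangle N. a i j * (real (i+j) powr \<nu> - real i powr \<nu> - real j powr \<nu>) * x i * x j)
     = (\<Sum>(i,j)\<in>index_triangle N. real (i+j) powr \<nu> * a i j * x i * x j)
       - (\<Sum>(i,j)\<in>index_triangle N. real i powr \<nu> * a i j * x i * x j) - (\<Sum>(i,j)\<in>index_triangle N. real j powr \<nu> * a i j * x i * x j)"
    by (simp add: sum_subtractf[symmetric] case_prod_beta algebra_simps)
  show ?thesis unfolding expand g split l2 using l1 by simp
qed



lemma gain_sum_le:
  fixes x :: "nat \<Rightarrow> real" and a :: "nat \<Rightarrow> nat \<Rightarrow> real"
  assumes xnn: "\<And>k. k \<ge> 1 \<Longrightarrow> x k \<ge> 0"
    and anon: "\<And>k l. k \<ge> 1 \<Longrightarrow> l \<ge> 1 \<Longrightarrow> 0 \<le> a k l"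
    and abd: "\<And>k l. k \<ge> 1 \<Longrightarrow> l \<ge> 1 \<Longrightarrow>
        a k l \<le> A * (real k powr \<alpha> * real l powr \<beta> + real k powr \<beta> * real l powr \<alpha>)"
    and ab: "0 \<le> \<alpha>" "\<alpha> \<le> \<beta>" "\<beta> \<le> 1" and mu: "\<mu> > 1" "\<alpha> + \<beta> > 2 - \<mu>" and A: "A > 0"
  shows "(1/2) * (\<Sum>(i,j)\<in>index_triangle N. a i j * (real (i+j) powr \<mu> - real i powr \<mu> - real j powr \<mu>) * x i * x j)
     \<le> A * gain_const \<mu> * ((\<Sum>k\<in>{1..N}. real k powr (\<mu>+\<alpha>+\<beta>-1) * x k) * (\<Sum>k\<in>{1..N}. real k * x k))"
proof -
  define S where "S = \<mu>+\<alpha>+\<beta>-1"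
  define G where "G i j = A * gain_const \<mu> * ((real i powr S * real j + real i * real j powr S) * x i * x j)" for i j
  have G0: "G i j \<ge> 0" if "i \<ge> 1" "j \<ge> 1" for i j
    using gain_const_nonneg[OF mu(1)] A xnn that unfolding G_def by (intro mult_nonneg_nonneg) auto
  have pt: "a i j * (real (i+j) powr \<mu> - real i powr \<mu> - real j powr \<mu>) * x i * x j \<le> G i j"
    if ij: "(i,j) \<in> index_triangle N" for i j
  proof -
    have i: "i \<ge> 1" "j \<ge> 1" using ij by (auto simp: index_triangle_def)
    have ri: "real i > 0" "real j > 0" using i by auto
    have D0: "0 \<le> real (i+j) powr \<mu> - real i powr \<mu> - real j powr \<mu>"
      using powr_add_le_powr_sum[of \<mu> "real i" "real j"] mu by simp
    have gb: "(real i powr \<alpha> * real j powr \<beta> + real i powr \<beta> * real j powr \<alpha>) * (real (i+j) powr \<mu> - real i powr \<mu> - real j powr \<mu>)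
        \<le> gain_const \<mu> * (real i powr S * real j + real i * real j powr S)"
      using gain_bound[OF ri ab mu] by (simp add: S_def)
    have "a i j * (real (i+j) powr \<mu> - real i powr \<mu> - real j powr \<mu>)
        \<le> A * (real i powr \<alpha> * real j powr \<beta> + real i powr \<beta> * real j powr \<alpha>) * (real (i+j) powr \<mu> - real i powr \<mu> - real j powr \<mu>)"
      by (rule mult_right_mono[OF abd[OF i] D0])
    also have "\<dots> \<le> A * (gain_const \<mu> * (real i powr S * real j + real i * real j powr S))"
      using gb A by (simp add: mult.assoc)
    finally have "a i j * (real (i+j) powr \<mu> - real i powr \<mu> - real j powr \<mu>) * (x i * x j)
        \<le> A * (gain_const \<mu> * (real i powr S * real j + real i * real j powr S)) * (x i * x j)"
      by (rule mult_right_mono) (use xnn i in simp)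
    then show ?thesis by (simp add: G_def algebra_simps)
  qed
  have "(\<Sum>(i,j)\<in>index_triangle N. a i j * (real (i+j) powr \<mu> - real i powr \<mu> - real j powr \<mu>) * x i * x j)
      \<le> (\<Sum>(i,j)\<in>index_triangle N. G i j)"
    using pt by (intro sum_mono) auto
  also have "\<dots> \<le> (\<Sum>(i,j)\<in>{1..N}\<times>{1..N}. G i j)"
    by (rule sum_mono2) (auto simp: index_triangle_def G0)
  also have "\<dots> = A * gain_const \<mu> * (\<Sum>i\<in>{1..N}. \<Sum>j\<in>{1..N}. (real i powr S * x i) * (real j * x j) + (real i * x i) * (real j powr S * x j))"
    by (simp add: sum.cartesian_product[symmetric] G_def sum_distrib_left algebra_simps)
  also have "\<dots> = A * gain_const \<mu> * (2 * ((\<Sum>k\<in>{1..N}. real k powr S * x k) * (\<Sum>k\<in>{1..N}. real k * x k)))"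
  proof -
    have e1: "(\<Sum>i\<in>{1..N}. \<Sum>j\<in>{1..N}. (real i powr S * x i) * (real j * x j)) = (\<Sum>k\<in>{1..N}. real k powr S * x k) * (\<Sum>k\<in>{1..N}. real k * x k)"
      by (rule sum_product[symmetric])
    have e2: "(\<Sum>i\<in>{1..N}. \<Sum>j\<in>{1..N}. (real i * x i) * (real j powr S * x j)) = (\<Sum>k\<in>{1..N}. real k * x k) * (\<Sum>k\<in>{1..N}. real k powr S * x k)"
      by (rule sum_product[symmetric])
    show ?thesis unfolding sum.distrib e1 e2 by (simp add: algebra_simps)
  qed
  finally show ?thesis by (simp add: S_def algebra_simps)
qed

lemma Youngs_inequality_absorb:
  fixes p q b X Y \<kappa> :: real
  assumes p: "p > 1" and q: "q = p / (p - 1)" and b: "b \<ge> 0" and X: "X \<ge> 0" and Y: "Y \<ge> 0" and \<kappa>: "\<kappa> > 0"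
  shows "b * (X powr (2 - 1/q) * Y powr (1/q)) \<le> \<kappa> * Y / q + b powr p * X powr (p+1) * \<kappa> powr (1-p) / p"
proof -
  have q1: "q > 1" unfolding q using p by (simp add: less_divide_eq)
  have pq: "1/p + 1/q = 1" unfolding q using p by (simp add: field_simps)
  define aa where "aa = b * X powr (2 - 1/q) * \<kappa> powr (-1/q)"
  define bb where "bb = (\<kappa> * Y) powr (1/q)"
  have aa0: "aa \<ge> 0" "bb \<ge> 0" by (auto simp: aa_def bb_def intro!: mult_nonneg_nonneg b)
  have "aa * bb \<le> aa powr p / p + bb powr q / q" by (rule Youngs_inequality) (use p q1 pq aa0 in auto)
  moreover have "aa * bb = b * (X powr (2 - 1/q) * Y powr (1/q))"
  proof -
    have "\<kappa> powr (-1/q) * \<kappa> powr (1/q) = 1" using \<kappa> by (simp add: powr_add[symmetric])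
    then show ?thesis unfolding aa_def bb_def by (simp add: powr_mult algebra_simps)
  qed
  moreover have "bb powr q = \<kappa> * Y" unfolding bb_def using q1 \<kappa> Y by (simp add: powr_powr)
  moreover have "aa powr p = b powr p * X powr (p+1) * \<kappa> powr (1-p)"
  proof -
    have e1: "(2 - 1/q) * p = p + 1" unfolding q using p by (simp add: field_simps)
    have e2: "(-1/q) * p = 1 - p" unfolding q using p by (simp add: field_simps)
    have e3: "- (p / q) = 1 - p" using e2 by simp
    show ?thesis unfolding aa_def using b X \<kappa>
      by (simp add: powr_mult powr_powr e1 e2 e3)
  qed
  ultimately show ?thesis by simp
qed


section \<open>Moment estimates for solutions\<close>

locale forced_coagulation =
  fixes a :: "nat \<Rightarrow> nat \<Rightarrow> real" and r s cin :: "nat \<Rightarrow> real"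
    and c :: "real \<Rightarrow> nat \<Rightarrow> real"
    and A R \<alpha> \<beta> \<gamma> \<mu> :: real and \<ss> :: "real \<Rightarrow> real"
  assumes A_pos: "A > 0" and \<alpha>\<beta>: "0 \<le> \<alpha>" "\<alpha> \<le> \<beta>" "\<beta> \<le> 1"
    and a_sym: "\<And>k l. k \<ge> 1 \<Longrightarrow> l \<ge> 1 \<Longrightarrow> a k l = a l k"
    and a_nonneg: "\<And>k l. k \<ge> 1 \<Longrightarrow> l \<ge> 1 \<Longrightarrow> 0 \<le> a k l"
    and a_bound: "\<And>k l. k \<ge> 1 \<Longrightarrow> l \<ge> 1 \<Longrightarrow>
        a k l \<le> A * (real k powr \<alpha> * real l powr \<beta> + real k powr \<beta> * real l powr \<alpha>)"
    and R_pos: "R > 0" and \<gamma>: "\<gamma> > max 0 (\<alpha> + \<beta> - 1)"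
    and r_bound: "\<And>k. k \<ge> 1 \<Longrightarrow> r k \<ge> R * real k powr \<gamma>"
    and s_nonneg: "\<And>k. k \<ge> 1 \<Longrightarrow> s k \<ge> 0"
    and s_mom: "\<And>\<nu>. \<nu> \<ge> 0 \<Longrightarrow> \<ss> \<nu> > 0 \<and>
        (\<lambda>k. real k powr \<nu> * s k) summable_on {1..} \<and>
        (\<Sum>\<^sub>\<infinity>k\<in>{1..}. real k powr \<nu> * s k) \<le> \<ss> \<nu>"
    and sol: "global_solution a s r cin c"
    and \<mu>: "\<mu> > max (2 - \<alpha> - \<beta>) 1"
begin

lemma \<mu>_gt: "\<mu> > 1" "\<alpha> + \<beta> > 2 - \<mu>"
  using \<mu> by auto

lemma \<gamma>_gt: "\<gamma> > 0" "\<gamma> > \<alpha> + \<beta> - 1"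
  using \<gamma> by auto

lemma c_nonneg: "t \<ge> 0 \<Longrightarrow> k \<ge> 1 \<Longrightarrow> 0 \<le> c t k"
  using sol unfolding global_solution_def by blast

lemma c_has_derivative:
  "t > 0 \<Longrightarrow> k \<ge> 1 \<Longrightarrow> ((\<lambda>\<tau>. c \<tau> k) has_real_derivative coag_rhs a s r (c t) k) (at t)"
  using sol unfolding global_solution_def by blast

definition moment_rate :: "real \<Rightarrow> real \<Rightarrow> real" where
  "moment_rate \<nu> t = infsum (\<lambda>k. real k powr \<nu> * coag_rhs a s r (c t) k) {1..}"

definition partial_moment :: "real \<Rightarrow> nat \<Rightarrow> real \<Rightarrow> real" where
  "partial_moment e N t = (\<Sum>k\<in>{1..N}. real k powr e * c t k)"

lemma moment_has_derivative:
  assumes "\<nu> \<ge> 1" "t > 0"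
  shows "((\<lambda>\<tau>. moment \<nu> (c \<tau>)) has_real_derivative moment_rate \<nu> t) (at t)"
    and "(\<lambda>k. real k powr \<nu> * coag_rhs a s r (c t) k) summable_on {1..}"
    and "wl1 \<nu> (c t)"
  using C1_wl1_moment_has_derivative[of \<nu> c, OF _ c_has_derivative[OF assms(2)] assms(2)] sol assms(1)
  by (auto simp: moment_rate_def global_solution_def)

lemma moment_summable:
  "e \<ge> 1 \<Longrightarrow> t > 0 \<Longrightarrow> (\<lambda>k. real k powr e * c t k) summable_on {1..}"
  using wl1_imp_summable_on moment_has_derivative(3) by blast

lemma moment_nonneg: "t \<ge> 0 \<Longrightarrow> 0 \<le> moment e (c t)"
  unfolding moment_def by (intro infsum_nonneg) (auto intro!: mult_nonneg_nonneg c_nonneg)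

lemma partial_moment_nonneg: "t \<ge> 0 \<Longrightarrow> 0 \<le> partial_moment e N t"
  unfolding partial_moment_def by (intro sum_nonneg) (auto intro!: mult_nonneg_nonneg c_nonneg)

lemma partial_moment_le_moment: "e \<ge> 1 \<Longrightarrow> t > 0 \<Longrightarrow> partial_moment e N t \<le> moment e (c t)"
  unfolding partial_moment_def moment_def
  by (rule finite_sum_le_infsum[OF moment_summable]) (auto intro!: mult_nonneg_nonneg c_nonneg)

lemma partial_moment_tendsto:
  "e \<ge> 1 \<Longrightarrow> t > 0 \<Longrightarrow> (\<lambda>N. partial_moment e N t) \<longlonglongrightarrow> moment e (c t)"
  unfolding partial_moment_def moment_def by (rule partial_sums_tendsto_infsum[OF moment_summable])

lemma partial_moment_rate_tendsto:
  "\<nu> \<ge> 1 \<Longrightarrow> t > 0 \<Longrightarrow>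
    (\<lambda>N. \<Sum>k\<in>{1..N}. real k powr \<nu> * coag_rhs a s r (c t) k) \<longlonglongrightarrow> moment_rate \<nu> t"
  unfolding moment_rate_def by (rule partial_sums_tendsto_infsum[OF moment_has_derivative(2)])

lemma partial_moment_mono_exponent:
  "t \<ge> 0 \<Longrightarrow> e \<le> e' \<Longrightarrow> partial_moment e N t \<le> partial_moment e' N t"
  unfolding partial_moment_def
  by (intro sum_mono mult_right_mono powr_mono) (auto intro: c_nonneg)

lemma coag_loss_summable:
  assumes t: "t > 0" and k: "k \<ge> 1"
  shows "(\<lambda>l. a k l * c t l) summable_on {1..}"
proof -
  have s1: "(\<lambda>l. 2 * A * real k * (real l powr 1 * c t l)) summable_on {1..}"
    using moment_summable[of 1 t] t by (intro summable_on_cmult_right) auto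
  show ?thesis
  proof (rule summable_on_comparison_test[OF s1])
    fix l :: nat assume "l \<in> {1..}"
    then have l: "l \<ge> 1"
      by simp
    have "real k powr \<alpha> \<le> real k" "real k powr \<beta> \<le> real k" "real l powr \<alpha> \<le> real l" "real l powr \<beta> \<le> real l"
      using powr_mono[of _ 1 "real k"] powr_mono[of _ 1 "real l"] k l \<alpha>\<beta> by auto
    then have "real k powr \<alpha> * real l powr \<beta> + real k powr \<beta> * real l powr \<alpha> \<le> 2 * (real k * real l)"
      using mult_mono by (smt (verit) powr_ge_zero)
    then have "a k l \<le> A * (2 * (real k * real l))"
      using a_bound[OF k l] A_pos by (smt (verit) mult_left_mono)
    then have "a k l * c t l \<le> A * (2 * (real k * real l)) * c t l"
      by (rule mult_right_mono) (use c_nonneg t l in simp)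
    then show "a k l * c t l \<le> 2 * A * real k * (real l powr 1 * c t l)"
      using l by (simp add: algebra_simps)
    show "0 \<le> a k l * c t l"
      using a_nonneg[OF k l] c_nonneg[of t l] t l by simp
  qed
qed

lemma partial_moment_rate_le:
  "t > 0 \<Longrightarrow> (\<Sum>k\<in>{1..N}. real k powr \<nu> * coag_rhs a s r (c t) k) \<le>
     (1/2) * (\<Sum>(i,j)\<in>index_triangle N. a i j * (real (i+j) powr \<nu> - real i powr \<nu> - real j powr \<nu>) * c t i * c t j)
     + (\<Sum>k\<in>{1..N}. real k powr \<nu> * s k) - (\<Sum>k\<in>{1..N}. real k powr \<nu> * r k * c t k)"
  by (rule moment_sum_coag_rhs_le) (auto intro: c_nonneg a_nonneg a_sym coag_loss_summable[simplified])

lemma source_sum_le: "\<nu> \<ge> 0 \<Longrightarrow> (\<Sum>k\<in>{1..N}. real k powr \<nu> * s k) \<le> \<ss> \<nu>"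
  using finite_sum_le_infsum[of "\<lambda>k. real k powr \<nu> * s k" "{1..}" "{1..N}"] s_mom[of \<nu>] s_nonneg
  by fastforce

lemma removal_sum_ge:
  "t \<ge> 0 \<Longrightarrow> R * partial_moment (\<nu> + \<gamma>) N t \<le> (\<Sum>k\<in>{1..N}. real k powr \<nu> * r k * c t k)"
  unfolding partial_moment_def sum_distrib_left
proof (rule sum_mono)
  fix k assume t: "t \<ge> 0" and k: "k \<in> {1..N}"
  have "real k powr \<nu> * c t k * (R * real k powr \<gamma>) \<le> real k powr \<nu> * c t k * r k"
    using r_bound k c_nonneg t by (intro mult_left_mono) auto
  then show "R * (real k powr (\<nu> + \<gamma>) * c t k) \<le> real k powr \<nu> * r k * c t k"
    by (simp add: powr_add algebra_simps)
qed

text \<open>Coagulation conserves mass, so the first moment only feels source and removal.\<close>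
lemma moment_rate_one_le: "t > 0 \<Longrightarrow> moment_rate 1 t \<le> \<ss> 1 - R * moment 1 (c t)"
proof (rule LIMSEQ_le[OF partial_moment_rate_tendsto[of 1 t]])
  assume t: "t > 0"
  show "(\<lambda>N. \<ss> 1 - R * partial_moment 1 N t) \<longlonglongrightarrow> \<ss> 1 - R * moment 1 (c t)"
    by (intro tendsto_intros partial_moment_tendsto) (use t in auto)
  have "(\<Sum>k\<in>{1..N}. real k powr 1 * coag_rhs a s r (c t) k) \<le> \<ss> 1 - R * partial_moment 1 N t" for N
  proof -
    have "(\<Sum>(i,j)\<in>index_triangle N. a i j * (real (i+j) powr 1 - real i powr 1 - real j powr 1) * c t i * c t j) = 0"
      by (intro sum.neutral) auto
    moreover have "R * partial_moment 1 N t \<le> R * partial_moment (1 + \<gamma>) N t"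
      using partial_moment_mono_exponent[of t 1 "1 + \<gamma>"] \<gamma>_gt t R_pos by simp
    ultimately show ?thesis
      using partial_moment_rate_le[OF t, where N=N and \<nu>=1] source_sum_le[of 1 N] removal_sum_ge[of t 1 N] t by simp
  qed
  then show "\<exists>N0. \<forall>N\<ge>N0. (\<Sum>k\<in>{1..N}. real k powr 1 * coag_rhs a s r (c t) k) \<le> \<ss> 1 - R * partial_moment 1 N t"
    by blast
qed (auto)

definition pexp :: real where "pexp = (\<mu> + \<gamma> - 1) / (1 + \<gamma> - \<alpha> - \<beta>)"
definition qexp :: real where "qexp = pexp / (pexp - 1)"
definition \<rho> :: real where "\<rho> = \<gamma> / (\<mu> - 1)"

text \<open>What remains of the gain term after Young's inequality has traded a fraction \<open>\<eta>\<close> of the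
  removal term \<open>R * m\<^sub>\<mu>\<^sub>+\<^sub>\<gamma>\<close> for a power of the first moment \<open>X\<close>.\<close>
definition young_rem :: "real \<Rightarrow> real \<Rightarrow> real" where
  "young_rem \<eta> X = (A * gain_const \<mu>) powr pexp * X powr (pexp + 1) * (qexp * \<eta> * R) powr (1 - pexp) / pexp"

lemma pexp_gt: "pexp > 1"
  unfolding pexp_def using \<gamma>_gt \<mu>_gt by (simp add: less_divide_eq)

lemma qexp_gt: "qexp > 1"
  unfolding qexp_def using pexp_gt by (simp add: less_divide_eq)

lemma inverse_qexp: "1 / qexp = (\<mu> + \<alpha> + \<beta> - 2) / (\<mu> + \<gamma> - 1)"
proof -
  have d: "1 + \<gamma> - \<alpha> - \<beta> > 0" "\<mu> + \<gamma> - 1 > 0"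
    using \<gamma>_gt \<mu>_gt by auto
  have "1 / qexp = 1 - 1 / pexp"
    unfolding qexp_def using pexp_gt by (simp add: field_simps)
  also have "1 / pexp = (1 + \<gamma> - \<alpha> - \<beta>) / (\<mu> + \<gamma> - 1)"
    unfolding pexp_def by simp
  finally show ?thesis
    using d by (simp add: field_simps)
qed

lemma \<rho>_nonneg: "\<rho> \<ge> 0"
  unfolding \<rho>_def using \<mu>_gt \<gamma>_gt by simp

lemma young_rem_mono: "0 \<le> X \<Longrightarrow> X \<le> X' \<Longrightarrow> 0 < \<eta> \<Longrightarrow> young_rem \<eta> X \<le> young_rem \<eta> X'"
  unfolding young_rem_def using pexp_gt
  by (intro divide_right_mono mult_right_mono mult_left_mono powr_mono2) auto

text \<open>The gain term is bounded through the moment of order \<open>\<mu> + \<alpha> + \<beta> - 1\<close>, which is interpolated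
  between the first and the \<open>(\<mu> + \<gamma>)\<close>-th moment; since \<open>\<gamma> > \<alpha> + \<beta> - 1\<close> the latter enters
  with power \<open>1 / qexp < 1\<close> and Young's inequality applies.\<close>
lemma gain_term_le:
  assumes t: "t \<ge> 0" and \<eta>: "\<eta> > 0"
  shows "(1/2) * (\<Sum>(i,j)\<in>index_triangle N.
            a i j * (real (i+j) powr \<mu> - real i powr \<mu> - real j powr \<mu>) * c t i * c t j)
    \<le> \<eta> * R * partial_moment (\<mu> + \<gamma>) N t + young_rem \<eta> (partial_moment 1 N t)"
proof -
  define X Y where "X = partial_moment 1 N t" and "Y = partial_moment (\<mu> + \<gamma>) N t"
  define b where "b = A * gain_const \<mu>"
  have X0: "X \<ge> 0" "Y \<ge> 0" "b \<ge> 0"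
    unfolding X_def Y_def b_def using partial_moment_nonneg t gain_const_nonneg[OF \<mu>_gt(1)] A_pos by auto
  have "(1/2) * (\<Sum>(i,j)\<in>index_triangle N.
            a i j * (real (i+j) powr \<mu> - real i powr \<mu> - real j powr \<mu>) * c t i * c t j)
      \<le> b * (partial_moment (\<mu> + \<alpha> + \<beta> - 1) N t * X)"
    using gain_sum_le[of "c t" a A \<alpha> \<beta> \<mu> N] c_nonneg t a_nonneg a_bound \<alpha>\<beta> \<mu>_gt A_pos
    unfolding b_def X_def partial_moment_def by (simp add: mult.assoc)
  also have "\<dots> \<le> b * ((X powr (1 - 1/qexp) * Y powr (1/qexp)) * X)"
  proof -
    have "1/qexp * (\<mu> + \<gamma> - 1) = \<mu> + \<alpha> + \<beta> - 2"
      unfolding inverse_qexp using \<mu>_gt \<gamma>_gt by simp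
    moreover have "1/qexp * (\<mu> + \<gamma>) = 1/qexp * (\<mu> + \<gamma> - 1) + 1/qexp"
      by (simp add: distrib_left right_diff_distrib)
    ultimately have exponent: "(1 - 1/qexp) + 1/qexp * (\<mu> + \<gamma>) = \<mu> + \<alpha> + \<beta> - 1"
      by linarith
    have "partial_moment (\<mu> + \<alpha> + \<beta> - 1) N t \<le> X powr (1 - 1/qexp) * Y powr (1/qexp)"
      using sum_moment_interpolation[of "{1..N}" "c t" "1/qexp" "\<mu> + \<gamma>", unfolded exponent]
        qexp_gt c_nonneg t
      unfolding X_def Y_def partial_moment_def by simp
    then show ?thesis
      using X0 by (intro mult_left_mono mult_right_mono) auto
  qed
  also have "(X powr (1 - 1/qexp) * Y powr (1/qexp)) * X = X powr (2 - 1/qexp) * Y powr (1/qexp)"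
  proof -
    have "X powr (1 - 1/qexp) * X powr 1 = X powr (2 - 1/qexp)"
      by (simp only: powr_add[symmetric]) (simp add: algebra_simps)
    then show ?thesis
      using X0 by (simp add: algebra_simps)
  qed
  also have "b * (X powr (2 - 1/qexp) * Y powr (1/qexp)) \<le> (qexp * \<eta> * R) * Y / qexp + young_rem \<eta> X"
    unfolding young_rem_def b_def[symmetric]
    by (rule Youngs_inequality_absorb[OF pexp_gt qexp_def]) (use X0 qexp_gt \<eta> R_pos in auto)
  also have "(qexp * \<eta> * R) * Y / qexp = \<eta> * R * Y"
    using qexp_gt by simp
  finally show ?thesis
    unfolding X_def Y_def .
qed

lemma partial_moment_rate_\<mu>_le:
  assumes t: "t > 0" and \<eta>: "\<eta> > 0"
  shows "(1 - \<eta>) * R * partial_moment (\<mu> + \<gamma>) N t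
    \<le> \<ss> \<mu> + young_rem \<eta> (moment 1 (c t)) - (\<Sum>k\<in>{1..N}. real k powr \<mu> * coag_rhs a s r (c t) k)"
proof -
  have "young_rem \<eta> (partial_moment 1 N t) \<le> young_rem \<eta> (moment 1 (c t))"
    using young_rem_mono partial_moment_nonneg partial_moment_le_moment t \<eta> by simp
  then show ?thesis
    using partial_moment_rate_le[OF t, where N = N and \<nu> = \<mu>] gain_term_le[of t \<eta> N] t \<eta>
      source_sum_le[of \<mu> N] removal_sum_ge[of t \<mu> N] \<mu>_gt
    by (simp add: algebra_simps)
qed

lemma moment_rate_\<mu>_le:
  assumes t: "t > 0" and \<eta>: "0 < \<eta>" "\<eta> < 1"
  shows "(1 - \<eta>) * R * moment \<mu> (c t) \<le> \<ss> \<mu> + young_rem \<eta> (moment 1 (c t)) - moment_rate \<mu> t"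
proof (rule LIMSEQ_le)
  show "(\<lambda>N. (1 - \<eta>) * R * partial_moment \<mu> N t) \<longlonglongrightarrow> (1 - \<eta>) * R * moment \<mu> (c t)"
    by (intro tendsto_intros partial_moment_tendsto) (use t \<mu>_gt in auto)
  show "(\<lambda>N. \<ss> \<mu> + young_rem \<eta> (moment 1 (c t)) - (\<Sum>k\<in>{1..N}. real k powr \<mu> * coag_rhs a s r (c t) k))
      \<longlonglongrightarrow> \<ss> \<mu> + young_rem \<eta> (moment 1 (c t)) - moment_rate \<mu> t"
    by (intro tendsto_intros partial_moment_rate_tendsto) (use t \<mu>_gt in auto)
  have "(1 - \<eta>) * R * partial_moment \<mu> N t \<le> (1 - \<eta>) * R * partial_moment (\<mu> + \<gamma>) N t" for N
    using partial_moment_mono_exponent[of t \<mu> "\<mu> + \<gamma>" N] t \<gamma>_gt \<eta> R_pos by simp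
  then show "\<exists>N0. \<forall>N\<ge>N0. (1 - \<eta>) * R * partial_moment \<mu> N t
      \<le> \<ss> \<mu> + young_rem \<eta> (moment 1 (c t)) - (\<Sum>k\<in>{1..N}. real k powr \<mu> * coag_rhs a s r (c t) k)"
    using partial_moment_rate_\<mu>_le[OF t \<eta>(1)] order_trans by blast
qed

lemma moment_rate_\<mu>_le_powr:
  assumes t: "t > 0" and \<eta>: "0 < \<eta>" "\<eta> < 1"
  shows "(1 - \<eta>) * R * moment \<mu> (c t) powr (1 + \<rho>)
    \<le> moment 1 (c t) powr \<rho> * (\<ss> \<mu> + young_rem \<eta> (moment 1 (c t)) - moment_rate \<mu> t)"
proof (rule LIMSEQ_le)
  show "(\<lambda>N. (1 - \<eta>) * R * partial_moment \<mu> N t powr (1 + \<rho>)) \<longlonglongrightarrow> (1 - \<eta>) * R * moment \<mu> (c t) powr (1 + \<rho>)"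
    by (intro tendsto_intros tendsto_powr' partial_moment_tendsto)
      (use t \<mu>_gt \<rho>_nonneg partial_moment_nonneg in auto)
  show "(\<lambda>N. moment 1 (c t) powr \<rho> * (\<ss> \<mu> + young_rem \<eta> (moment 1 (c t))
        - (\<Sum>k\<in>{1..N}. real k powr \<mu> * coag_rhs a s r (c t) k)))
      \<longlonglongrightarrow> moment 1 (c t) powr \<rho> * (\<ss> \<mu> + young_rem \<eta> (moment 1 (c t)) - moment_rate \<mu> t)"
    by (intro tendsto_intros partial_moment_rate_tendsto) (use t \<mu>_gt in auto)
  have "(1 - \<eta>) * R * partial_moment \<mu> N t powr (1 + \<rho>)
      \<le> moment 1 (c t) powr \<rho> * (\<ss> \<mu> + young_rem \<eta> (moment 1 (c t))
        - (\<Sum>k\<in>{1..N}. real k powr \<mu> * coag_rhs a s r (c t) k))" for N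
  proof -
    define X Y where "X = partial_moment 1 N t" and "Y = partial_moment (\<mu> + \<gamma>) N t"
    have "partial_moment \<mu> N t powr (1 + \<rho>) \<le> X powr \<rho> * Y"
      using sum_moment_interpolation_powr[of "c t" \<mu> \<gamma> N] c_nonneg t \<mu>_gt \<gamma>_gt
      unfolding X_def Y_def partial_moment_def \<rho>_def by simp
    then have "(1 - \<eta>) * R * partial_moment \<mu> N t powr (1 + \<rho>) \<le> X powr \<rho> * ((1 - \<eta>) * R * Y)"
      using \<eta> R_pos by (simp add: mult_left_mono)
    also have "\<dots> \<le> X powr \<rho> * (\<ss> \<mu> + young_rem \<eta> (moment 1 (c t))
        - (\<Sum>k\<in>{1..N}. real k powr \<mu> * coag_rhs a s r (c t) k))"
      using partial_moment_rate_\<mu>_le[OF t \<eta>(1), of N] unfolding Y_def by (intro mult_left_mono) auto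
    also have "\<dots> \<le> moment 1 (c t) powr \<rho> * (\<ss> \<mu> + young_rem \<eta> (moment 1 (c t))
        - (\<Sum>k\<in>{1..N}. real k powr \<mu> * coag_rhs a s r (c t) k))"
    proof (rule mult_right_mono)
      show "X powr \<rho> \<le> moment 1 (c t) powr \<rho>"
        using partial_moment_le_moment[of 1 t N] partial_moment_nonneg[of t 1 N] t \<rho>_nonneg
        unfolding X_def by (intro powr_mono2) auto
      have "0 \<le> (1 - \<eta>) * R * Y"
        using \<eta> R_pos partial_moment_nonneg[of t] t unfolding Y_def by simp
      then show "0 \<le> \<ss> \<mu> + young_rem \<eta> (moment 1 (c t))
          - (\<Sum>k\<in>{1..N}. real k powr \<mu> * coag_rhs a s r (c t) k)"
        using partial_moment_rate_\<mu>_le[OF t \<eta>(1), of N] unfolding Y_def by linarith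
    qed
    finally show ?thesis .
  qed
  then show "\<exists>N0. \<forall>N\<ge>N0. (1 - \<eta>) * R * partial_moment \<mu> N t powr (1 + \<rho>)
      \<le> moment 1 (c t) powr \<rho> * (\<ss> \<mu> + young_rem \<eta> (moment 1 (c t))
        - (\<Sum>k\<in>{1..N}. real k powr \<mu> * coag_rhs a s r (c t) k))"
    by blast
qed

definition gain_ratio :: real where "gain_ratio = gain_const \<mu> / (2 powr \<mu> * \<mu>)"
text \<open>Any value strictly between \<open>gain_ratio\<close> and \<open>3/4\<close> would do: the lower bound keeps the
  Young remainder below \<open>R * M\<close>, the upper bound leaves more than a quarter of the removal term.\<close>
definition \<eta>0 :: real where "\<eta>0 = (gain_ratio + 3/4) / 2"
definition s1 :: real where "s1 = \<ss> 1 / R"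
definition s\<mu> :: real where "s\<mu> = \<ss> \<mu> / R"
definition young_const :: real where "young_const = (2 powr \<mu> * \<mu>) powr pexp * qexp powr (1 - pexp) / pexp"
definition M :: real where "M = young_const * (A / R) powr pexp * s1 powr (1 + pexp)"

text \<open>The first moment is attracted to \<open>[0, s1]\<close>; it eventually lies below \<open>margin * s1\<close>, and
  \<open>margin > 1\<close> is so close to \<open>1\<close> that the powers \<open>margin powr (pexp + 1)\<close> and
  \<open>margin powr \<rho>\<close> entering the \<open>\<mu>\<close>-moment estimates cost at most a factor \<open>4/3\<close>.\<close>
definition margin :: real where "margin = (4/3) powr (1 / (pexp + 1 + \<rho>))"

lemma gain_ratio_bounds: "0 \<le> gain_ratio" "gain_ratio < 3/4"
  using gain_const_nonneg[OF \<mu>_gt(1)] gain_const_less[OF \<mu>_gt(1)] \<mu>_gt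
  unfolding gain_ratio_def by (auto simp: divide_less_eq)

lemma \<eta>0_bounds: "0 < \<eta>0" "\<eta>0 < 3/4" "gain_ratio \<le> \<eta>0"
  using gain_ratio_bounds unfolding \<eta>0_def by auto

lemma s1_pos: "s1 > 0" and s\<mu>_pos: "s\<mu> > 0"
  using s_mom[of 1] s_mom[of \<mu>] \<mu>_gt R_pos unfolding s1_def s\<mu>_def by auto

lemma M_pos: "M > 0"
  unfolding M_def young_const_def using pexp_gt qexp_gt \<mu>_gt s1_pos A_pos R_pos by simp

lemma margin_bounds: "margin > 1" "margin powr (pexp + 1) \<le> 4/3" "margin powr \<rho> \<le> 4/3"
proof -
  have d: "pexp + 1 + \<rho> > 0"
    using pexp_gt \<rho>_nonneg by simp
  show "margin > 1"
    unfolding margin_def using d by simp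
  have "margin powr (pexp + 1) = (4/3) powr ((pexp + 1) / (pexp + 1 + \<rho>))"
    unfolding margin_def by (simp add: powr_powr)
  also have "\<dots> \<le> (4/3) powr 1"
    using d \<rho>_nonneg by (intro powr_mono) (auto simp: divide_le_eq)
  finally show "margin powr (pexp + 1) \<le> 4/3"
    by simp
  have "margin powr \<rho> = (4/3) powr (\<rho> / (pexp + 1 + \<rho>))"
    unfolding margin_def by (simp add: powr_powr)
  also have "\<dots> \<le> (4/3) powr 1"
    using d pexp_gt by (intro powr_mono) (auto simp: divide_le_eq)
  finally show "margin powr \<rho> \<le> 4/3"
    by simp
qed

lemma young_rem_eq:
  assumes "\<eta> > 0" "X \<ge> 0"
  shows "young_rem \<eta> X
    = R * (gain_ratio powr pexp * \<eta> powr (1 - pexp)) * young_const * (A / R) powr pexp * X powr (pexp + 1)"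
proof -
  have "A * gain_const \<mu> = gain_ratio * (2 powr \<mu> * \<mu>) * A"
    unfolding gain_ratio_def using \<mu>_gt by simp
  then have "(A * gain_const \<mu>) powr pexp = gain_ratio powr pexp * (2 powr \<mu> * \<mu>) powr pexp * A powr pexp"
    using gain_ratio_bounds \<mu>_gt A_pos by (simp add: powr_mult)
  moreover have "(qexp * \<eta> * R) powr (1 - pexp) = qexp powr (1 - pexp) * \<eta> powr (1 - pexp) * (R / R powr pexp)"
    using qexp_gt assms R_pos by (simp add: powr_mult powr_diff)
  moreover have "(A / R) powr pexp = A powr pexp / R powr pexp"
    using A_pos R_pos by (simp add: powr_divide)
  ultimately show ?thesis
    unfolding young_rem_def young_const_def by (simp add: field_simps)
qed

lemma young_rem_margin_le: "young_rem \<eta>0 (margin * s1) \<le> R * M"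
proof -
  have "gain_ratio powr pexp * \<eta>0 powr (1 - pexp) \<le> \<eta>0 powr pexp * \<eta>0 powr (1 - pexp)"
    using gain_ratio_bounds \<eta>0_bounds pexp_gt by (intro mult_right_mono powr_mono2) auto
  also have "\<dots> = \<eta>0"
    using \<eta>0_bounds by (simp add: powr_add[symmetric])
  finally have ratio: "gain_ratio powr pexp * \<eta>0 powr (1 - pexp) \<le> \<eta>0" .
  have "(margin * s1) powr (pexp + 1) = margin powr (pexp + 1) * s1 powr (1 + pexp)"
    by (simp add: powr_mult add.commute)
  then have "young_rem \<eta>0 (margin * s1)
      = R * (gain_ratio powr pexp * \<eta>0 powr (1 - pexp)) * margin powr (pexp + 1) * M"
    using young_rem_eq[of \<eta>0 "margin * s1"] \<eta>0_bounds margin_bounds s1_pos unfolding M_def by simp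
  also have "\<dots> \<le> R * \<eta>0 * (4/3) * M"
    using ratio margin_bounds M_pos R_pos \<eta>0_bounds by (intro mult_mono mult_right_mono mult_left_mono) auto
  also have "\<dots> \<le> R * M"
    using \<eta>0_bounds R_pos M_pos by simp
  finally show ?thesis .
qed

lemma first_moment_eventually_le: "\<exists>T\<ge>1. \<forall>t\<ge>T. moment 1 (c t) \<le> margin * s1"
proof (rule eventually_le_if_DERIV_le_neg_above[where f' = "moment_rate 1" and \<delta> = "(margin - 1) * \<ss> 1"])
  show "((\<lambda>t. moment 1 (c t)) has_real_derivative moment_rate 1 t) (at t)" if "t \<ge> 1" for t
    using moment_has_derivative(1)[of 1 t] that by simp
  show "moment_rate 1 t \<le> - ((margin - 1) * \<ss> 1)" if "t \<ge> 1" "margin * s1 \<le> moment 1 (c t)" for t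
  proof -
    have "R * (margin * s1) = margin * \<ss> 1"
      unfolding s1_def using R_pos by simp
    moreover have "R * (margin * s1) \<le> R * moment 1 (c t)"
      using that R_pos by simp
    moreover have "- ((margin - 1) * \<ss> 1) = \<ss> 1 - margin * \<ss> 1"
      by (simp add: algebra_simps)
    ultimately show ?thesis
      using moment_rate_one_le[of t] that by linarith
  qed
  show "(margin - 1) * \<ss> 1 > 0"
    using margin_bounds s_mom[of 1] by simp
qed

lemma eventually_moment_rate_\<mu>_estimates:
  obtains T where "T \<ge> 1" and "\<And>t. t \<ge> T \<Longrightarrow>
      (1 - \<eta>0) * R * moment \<mu> (c t) \<le> R * (M + s\<mu>) - moment_rate \<mu> t"
    and "\<And>t. t \<ge> T \<Longrightarrow>
      (1 - \<eta>0) * R * moment \<mu> (c t) powr (1 + \<rho>) \<le> 4/3 * s1 powr \<rho> * (R * (M + s\<mu>) - moment_rate \<mu> t)"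
proof -
  obtain T where T: "T \<ge> 1" "\<And>t. t \<ge> T \<Longrightarrow> moment 1 (c t) \<le> margin * s1"
    using first_moment_eventually_le by blast
  have young: "young_rem \<eta>0 (moment 1 (c t)) \<le> R * M" if "t \<ge> T" for t
    using young_rem_mono[OF moment_nonneg T(2)[OF that] \<eta>0_bounds(1)] young_rem_margin_le T(1) that by simp
  have \<ss>\<mu>: "\<ss> \<mu> = R * s\<mu>"
    unfolding s\<mu>_def using R_pos by simp
  have linear: "(1 - \<eta>0) * R * moment \<mu> (c t) \<le> R * (M + s\<mu>) - moment_rate \<mu> t" if t: "t \<ge> T" for t
    using moment_rate_\<mu>_le[of t \<eta>0] young[OF t] T(1) t \<eta>0_bounds \<ss>\<mu> by (simp add: algebra_simps)
  moreover have "(1 - \<eta>0) * R * moment \<mu> (c t) powr (1 + \<rho>)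
      \<le> 4/3 * s1 powr \<rho> * (R * (M + s\<mu>) - moment_rate \<mu> t)" if t: "t \<ge> T" for t
  proof -
    have "0 \<le> (1 - \<eta>0) * R * moment \<mu> (c t)"
      using \<eta>0_bounds R_pos moment_nonneg[of t \<mu>] T(1) t by simp
    then have deficit: "0 \<le> R * (M + s\<mu>) - moment_rate \<mu> t"
      using linear[OF t] by linarith
    have "moment 1 (c t) powr \<rho> \<le> (margin * s1) powr \<rho>"
      using T t moment_nonneg[of t 1] \<rho>_nonneg by (intro powr_mono2) auto
    also have "\<dots> = margin powr \<rho> * s1 powr \<rho>"
      using margin_bounds s1_pos by (simp add: powr_mult)
    also have "\<dots> \<le> 4/3 * s1 powr \<rho>"
      using margin_bounds(3) by (rule mult_right_mono) simp
    finally have "moment 1 (c t) powr \<rho> * (R * (M + s\<mu>) - moment_rate \<mu> t)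
        \<le> 4/3 * s1 powr \<rho> * (R * (M + s\<mu>) - moment_rate \<mu> t)"
      using deficit by (rule mult_right_mono)
    moreover have "(1 - \<eta>0) * R * moment \<mu> (c t) powr (1 + \<rho>)
        \<le> moment 1 (c t) powr \<rho> * (\<ss> \<mu> + young_rem \<eta>0 (moment 1 (c t)) - moment_rate \<mu> t)"
      using moment_rate_\<mu>_le_powr[of t \<eta>0] T(1) t \<eta>0_bounds by simp
    moreover have "moment 1 (c t) powr \<rho> * (\<ss> \<mu> + young_rem \<eta>0 (moment 1 (c t)) - moment_rate \<mu> t)
        \<le> moment 1 (c t) powr \<rho> * (R * (M + s\<mu>) - moment_rate \<mu> t)"
      using young[OF t] \<ss>\<mu> by (intro mult_left_mono) (simp_all add: algebra_simps)
    ultimately show ?thesis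
      by linarith
  qed
  ultimately show ?thesis
    using that T(1) by blast
qed

lemma moment_\<mu>_eventually_le: "\<exists>T\<ge>1. \<forall>t\<ge>T. moment \<mu> (c t) \<le> 4 * (M + s\<mu>)"
proof -
  obtain T where T: "T \<ge> 1"
    and est: "\<And>t. t \<ge> T \<Longrightarrow> (1 - \<eta>0) * R * moment \<mu> (c t) \<le> R * (M + s\<mu>) - moment_rate \<mu> t"
    by (rule eventually_moment_rate_\<mu>_estimates) blast
  have "\<exists>T'\<ge>T. \<forall>t\<ge>T'. moment \<mu> (c t) \<le> 4 * (M + s\<mu>)"
  proof (rule eventually_le_if_DERIV_le_neg_above[where f' = "moment_rate \<mu>"])
    show "((\<lambda>t. moment \<mu> (c t)) has_real_derivative moment_rate \<mu> t) (at t)" if "t \<ge> T" for t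
      using moment_has_derivative(1)[of \<mu> t] that T \<mu>_gt by simp
    show "moment_rate \<mu> t \<le> - (R * (4 * (1 - \<eta>0) - 1) * (M + s\<mu>))"
      if t: "t \<ge> T" "4 * (M + s\<mu>) \<le> moment \<mu> (c t)" for t
    proof -
      have "(1 - \<eta>0) * R * (4 * (M + s\<mu>)) \<le> (1 - \<eta>0) * R * moment \<mu> (c t)"
        using t(2) \<eta>0_bounds R_pos by (intro mult_left_mono) auto
      moreover have "(1 - \<eta>0) * R * (4 * (M + s\<mu>)) - R * (M + s\<mu>) = R * (4 * (1 - \<eta>0) - 1) * (M + s\<mu>)"
        by (simp add: algebra_simps)
      ultimately show ?thesis
        using est[OF t(1)] by linarith
    qed
    show "R * (4 * (1 - \<eta>0) - 1) * (M + s\<mu>) > 0"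
      using R_pos M_pos s\<mu>_pos \<eta>0_bounds by simp
  qed
  then show ?thesis
    using T by (meson order_trans)
qed

lemma moment_\<mu>_eventually_le_powr:
  "\<exists>T\<ge>1. \<forall>t\<ge>T. moment \<mu> (c t) \<le> 2 * (2 powr (2 + \<rho>) * s1 powr \<rho> * (M + s\<mu>)) powr (1 / (1 + \<rho>))"
proof -
  obtain T where T: "T \<ge> 1"
    and est: "\<And>t. t \<ge> T \<Longrightarrow>
      (1 - \<eta>0) * R * moment \<mu> (c t) powr (1 + \<rho>) \<le> 4/3 * s1 powr \<rho> * (R * (M + s\<mu>) - moment_rate \<mu> t)"
    by (rule eventually_moment_rate_\<mu>_estimates) blast
  define K where "K = 2 * (2 powr (2 + \<rho>) * s1 powr \<rho> * (M + s\<mu>)) powr (1 / (1 + \<rho>))"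
  have \<rho>: "1 + \<rho> > 0"
    using \<rho>_nonneg by simp
  have pos: "M + s\<mu> > 0" "s1 powr \<rho> > 0"
    using M_pos s\<mu>_pos s1_pos by auto
  have "K powr (1 + \<rho>) = 2 powr (1 + \<rho>) * (2 powr (2 + \<rho>) * s1 powr \<rho> * (M + s\<mu>))"
    unfolding K_def using \<rho> pos by (simp add: powr_mult powr_powr)
  also have "\<dots> = 2 powr (3 + 2 * \<rho>) * (s1 powr \<rho> * (M + s\<mu>))"
    by (simp add: powr_add[symmetric] algebra_simps)
  also have "\<dots> \<ge> 2 powr 3 * (s1 powr \<rho> * (M + s\<mu>))"
    using \<rho>_nonneg pos by (intro mult_right_mono powr_mono) auto
  finally have K_powr: "8 * (s1 powr \<rho> * (M + s\<mu>)) \<le> K powr (1 + \<rho>)"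
    by simp
  have "\<exists>T'\<ge>T. \<forall>t\<ge>T'. moment \<mu> (c t) \<le> K"
  proof (rule eventually_le_if_DERIV_le_neg_above[where f' = "moment_rate \<mu>" and \<delta> = "R * (M + s\<mu>) / 2"])
    show "((\<lambda>t. moment \<mu> (c t)) has_real_derivative moment_rate \<mu> t) (at t)" if "t \<ge> T" for t
      using moment_has_derivative(1)[of \<mu> t] that T \<mu>_gt by simp
    show "moment_rate \<mu> t \<le> - (R * (M + s\<mu>) / 2)" if t: "t \<ge> T" "K \<le> moment \<mu> (c t)" for t
    proof -
      define Q where "Q = R * (M + s\<mu>)"
      have "K powr (1 + \<rho>) \<le> moment \<mu> (c t) powr (1 + \<rho>)"
        using t(2) \<rho> unfolding K_def by (intro powr_mono2) auto
      then have "(1 - \<eta>0) * R * (8 * (s1 powr \<rho> * (M + s\<mu>))) \<le> (1 - \<eta>0) * R * moment \<mu> (c t) powr (1 + \<rho>)"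
        using K_powr \<eta>0_bounds R_pos by (intro mult_left_mono) auto
      also have "\<dots> \<le> 4/3 * s1 powr \<rho> * (Q - moment_rate \<mu> t)"
        using est[OF t(1)] unfolding Q_def .
      finally have "s1 powr \<rho> * ((6 * (1 - \<eta>0)) * Q) \<le> s1 powr \<rho> * (Q - moment_rate \<mu> t)"
        unfolding Q_def by (simp add: algebra_simps)
      then have "(6 * (1 - \<eta>0)) * Q \<le> Q - moment_rate \<mu> t"
        using pos(2) by (rule mult_left_le_imp_le)
      moreover have "3/2 * Q \<le> (6 * (1 - \<eta>0)) * Q"
        unfolding Q_def using \<eta>0_bounds R_pos pos by (intro mult_right_mono) auto
      ultimately show ?thesis
        unfolding Q_def by linarith
    qed
    show "R * (M + s\<mu>) / 2 > 0"
      using R_pos pos by simp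
  qed
  then show ?thesis
    using T unfolding K_def by (meson order_trans)
qed

end

theorem mainTheorem8:
  fixes a :: "nat \<Rightarrow> nat \<Rightarrow> real" and r s cin :: "nat \<Rightarrow> real"
    and c :: "real \<Rightarrow> nat \<Rightarrow> real"
    and A R \<alpha> \<beta> \<gamma> \<mu> :: real and \<ss> :: "real \<Rightarrow> real"
  assumes A_pos: "A > 0" and \<alpha>\<beta>: "0 \<le> \<alpha>" "\<alpha> \<le> \<beta>" "\<beta> \<le> 1"
    and a_sym: "\<And>k l. k \<ge> 1 \<Longrightarrow> l \<ge> 1 \<Longrightarrow> a k l = a l k"
    and a_nonneg: "\<And>k l. k \<ge> 1 \<Longrightarrow> l \<ge> 1 \<Longrightarrow> 0 \<le> a k l"
    and a_bound: "\<And>k l. k \<ge> 1 \<Longrightarrow> l \<ge> 1 \<Longrightarrow>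
        a k l \<le> A * (real k powr \<alpha> * real l powr \<beta> + real k powr \<beta> * real l powr \<alpha>)"
    and R_pos: "R > 0" and \<gamma>: "\<gamma> > max 0 (\<alpha> + \<beta> - 1)"
    and r_bound: "\<And>k. k \<ge> 1 \<Longrightarrow> r k \<ge> R * real k powr \<gamma>"
    and s_nonneg: "\<And>k. k \<ge> 1 \<Longrightarrow> s k \<ge> 0"
    and s_mom: "\<And>\<nu>. \<nu> \<ge> 0 \<Longrightarrow> \<ss> \<nu> > 0 \<and>
        (\<lambda>k. real k powr \<nu> * s k) summable_on {1..} \<and>
        (\<Sum>\<^sub>\<infinity>k\<in>{1..}. real k powr \<nu> * s k) \<le> \<ss> \<nu>"
    and cin: "ell1 1 cin"
    and sol: "global_solution a s r cin c"
    and \<mu>: "\<mu> > max (2 - \<alpha> - \<beta>) 1"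
  shows "let \<rho> = \<gamma> / (\<mu> - 1);
             p = (\<mu> + \<gamma> - 1) / (1 + \<gamma> - \<alpha> - \<beta>);
             q = p / (p - 1);
             Ah = A / R; s1 = \<ss> 1 / R; s\<mu> = \<ss> \<mu> / R
         in \<exists>T>0. \<forall>t\<ge>T.
              moment \<mu> (c t) \<le> 2 * ((2 powr (2 + \<rho>) * (2 powr \<mu> * \<mu>) powr p * q powr (1 - p) / p)
                                    * Ah powr p * s1 powr (1 + p + \<rho>)
                                  + 2 powr (2 + \<rho>) * s\<mu> * s1 powr \<rho>) powr (1 / (1 + \<rho>))
            \<and> moment \<mu> (c t) \<le> 4 * ((2 powr \<mu> * \<mu>) powr p * q powr (1 - p) / p
                                    * Ah powr p * s1 powr (1 + p) + s\<mu>)"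
proof -
  \<comment> \<open>The bounds do not depend on the initial datum.\<close>
  interpret forced_coagulation a r s cin c A R \<alpha> \<beta> \<gamma> \<mu> \<ss>
    by unfold_locales (use A_pos \<alpha>\<beta> a_sym a_nonneg a_bound R_pos \<gamma> r_bound s_nonneg s_mom sol \<mu> in blast)+
  obtain T1 where T1: "T1 \<ge> 1"
    "\<forall>t\<ge>T1. moment \<mu> (c t) \<le> 2 * (2 powr (2 + \<rho>) * s1 powr \<rho> * (M + s\<mu>)) powr (1 / (1 + \<rho>))"
    using moment_\<mu>_eventually_le_powr by blast
  obtain T2 where T2: "T2 \<ge> 1" "\<forall>t\<ge>T2. moment \<mu> (c t) \<le> 4 * (M + s\<mu>)"
    using moment_\<mu>_eventually_le by blast
  have "2 powr (2 + \<rho>) * s1 powr \<rho> * (M + s\<mu>)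
      = (2 powr (2 + \<rho>) * (2 powr \<mu> * \<mu>) powr pexp * qexp powr (1 - pexp) / pexp)
          * (A / R) powr pexp * s1 powr (1 + pexp + \<rho>) + 2 powr (2 + \<rho>) * s\<mu> * s1 powr \<rho>"
    unfolding M_def young_const_def by (simp add: powr_add algebra_simps)
  moreover have "M + s\<mu> = (2 powr \<mu> * \<mu>) powr pexp * qexp powr (1 - pexp) / pexp
      * (A / R) powr pexp * s1 powr (1 + pexp) + s\<mu>"
    unfolding M_def young_const_def by simp
  ultimately show ?thesis
    using T1 T2 unfolding Let_def \<rho>_def pexp_def qexp_def s1_def s\<mu>_def
    by (intro exI[of _ "max T1 T2"]) auto
qed

end
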